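(* Let $D\subseteq\mathbb{R}^3\setminus\{0\}$ be open, $\Omega=\mathbb{R}^3\times D$, and let $\vec\mu=(\mu_1,\mu_2,\mu_3):\Omega\to\mathbb{R}^3$ be smooth. Then $\Pi_{\vec\mu}$ defines a Poisson bracket on $\Omega$ (i.e. $\{f,g\}_{\vec\mu}=(\nabla f)^T\Pi_{\vec\mu}\nabla g$ satisfies the Jacobi identity) if and only if there is a smooth $\vec\nu:D\times\mathbb{R}\to\mathbb{R}^3$ with $\vec\mu(\vec M,\vec\gamma)=\vec\nu(\vec\gamma,\vec M\cdot\vec\gamma)$ and $\vec\nu$ satisfies the Jacobi condition equation $$\vec\gamma\cdot \operatorname{curl}_{\vec\gamma}\vec\nu(\vec\gamma,s)+\vec\nu(\vec\gamma,s)\cdot\big(\vec\gamma\times \partial_s\vec\nu(\vec\gamma,s)\big)=0\quad\text{for all }(\vec\gamma,s)\in D\times\mathbb{R},$$ where $\operatorname{curl}_{\vec\gamma}$ is the curl with respect to $\vec\gamma$ with $s$ held fixed.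
   Context: Coordinates on $\mathbb{R}^6$ are $(\vec M,\vec\gamma)=(M_1,M_2,M_3,\gamma_1,\gamma_2,\gamma_3)$. For a smooth $\vec\mu=(\mu_1,\mu_2,\mu_3)$ of $(\vec M,\vec\gamma)$, $\Pi_{\vec\mu}$ is the skew-symmetric $6\times6$ matrix $$\Pi_{\vec\mu}=\begin{bmatrix}0&-M_3-\mu_3&M_2+\mu_2&0&-\gamma_3&\gamma_2\\ M_3+\mu_3&0&-M_1-\mu_1&\gamma_3&0&-\gamma_1\\ -M_2-\mu_2&M_1+\mu_1&0&-\gamma_2&\gamma_1&0\\ 0&-\gamma_3&\gamma_2&0&0&0\\ \gamma_3&0&-\gamma_1&0&0&0\\ -\gamma_2&\gamma_1&0&0&0&0\end{bmatrix},$$ and $\{f,g\}_{\vec\mu}=(\nabla f)^T\Pi_{\vec\mu}\nabla g$ for smooth $f,g$ (gradient in all six variables). *)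

theory Defs
  imports "HOL-Analysis.Analysis"
begin

definition dirderiv :: "'a::real_normed_vector \<Rightarrow> ('a \<Rightarrow> real) \<Rightarrow> 'a \<Rightarrow> real" where
  "dirderiv v f x = deriv (\<lambda>t. f (x + t *\<^sub>R v)) 0"

fun iterpd :: "'a::real_normed_vector list \<Rightarrow> ('a \<Rightarrow> real) \<Rightarrow> 'a \<Rightarrow> real" where
  "iterpd [] f = f"
| "iterpd (v # vs) f = dirderiv v (iterpd vs f)"

(* C^infinity on an open set: all iterated partial derivatives (w.r.t. the
   standard coordinates, i.e. the Basis) exist and are continuous on U. *)
definition smooth_on :: "'a::euclidean_space set \<Rightarrow> ('a \<Rightarrow> real) \<Rightarrow> bool" where
  "smooth_on U f \<longleftrightarrow>
     (\<forall>bs. set bs \<subseteq> Basis \<longrightarrow>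
        continuous_on U (iterpd bs f) \<and>
        (\<forall>b\<in>Basis. \<forall>x\<in>U. (\<lambda>t. iterpd bs f (x + t *\<^sub>R b)) differentiable (at 0)))"

definition smooth_vec_on :: "'a::euclidean_space set \<Rightarrow> ('a \<Rightarrow> real^3) \<Rightarrow> bool" where
  "smooth_vec_on U F \<longleftrightarrow> (\<forall>i. smooth_on U (\<lambda>x. F x $ i))"

(* Points of R^6 are written (M, gamma) with M, gamma in R^3. *)
definition ax3 :: "nat \<Rightarrow> real^3" where
  "ax3 k = (if k = 1 then axis 1 1 else if k = 2 then axis 2 1 else axis 3 1)"

definition e6 :: "nat \<Rightarrow> (real^3) \<times> (real^3)" where
  "e6 k = (if k \<le> 3 then (ax3 k, 0) else (0, ax3 (k - 3)))"

definition grad6 :: "((real^3) \<times> (real^3) \<Rightarrow> real) \<Rightarrow> (real^3) \<times> (real^3) \<Rightarrow> nat \<Rightarrow> real" where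
  "grad6 f p k = dirderiv (e6 k) f p"

definition PiMat :: "((real^3) \<times> (real^3) \<Rightarrow> real^3) \<Rightarrow> (real^3) \<times> (real^3) \<Rightarrow> nat \<Rightarrow> nat \<Rightarrow> real" where
  "PiMat mu p i j =
    (let M = fst p; g = snd p; m = mu p;
         A = [[0, -(M$3 + m$3), M$2 + m$2, 0, -(g$3), g$2],
              [M$3 + m$3, 0, -(M$1 + m$1), g$3, 0, -(g$1)],
              [-(M$2 + m$2), M$1 + m$1, 0, -(g$2), g$1, 0],
              [0, -(g$3), g$2, 0, 0, 0],
              [g$3, 0, -(g$1), 0, 0, 0],
              [-(g$2), g$1, 0, 0, 0, 0]]
     in A ! (i - 1) ! (j - 1))"

definition pbracket :: "((real^3) \<times> (real^3) \<Rightarrow> real^3) \<Rightarrow> ((real^3) \<times> (real^3) \<Rightarrow> real)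
     \<Rightarrow> ((real^3) \<times> (real^3) \<Rightarrow> real) \<Rightarrow> (real^3) \<times> (real^3) \<Rightarrow> real" where
  "pbracket mu f g p = (\<Sum>i=1..6. \<Sum>j=1..6. grad6 f p i * PiMat mu p i j * grad6 g p j)"

definition jacobi_on :: "((real^3) \<times> (real^3)) set \<Rightarrow> ((real^3) \<times> (real^3) \<Rightarrow> real^3) \<Rightarrow> bool" where
  "jacobi_on Omega mu \<longleftrightarrow>
     (\<forall>f g h. smooth_on Omega f \<and> smooth_on Omega g \<and> smooth_on Omega h \<longrightarrow>
        (\<forall>p\<in>Omega. pbracket mu f (pbracket mu g h) p + pbracket mu g (pbracket mu h f) p
                   + pbracket mu h (pbracket mu f g) p = 0))"

(* For nu : D x R -> R^3, variables (gamma, s). *)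
definition dgam :: "nat \<Rightarrow> ((real^3) \<times> real \<Rightarrow> real^3) \<Rightarrow> 3 \<Rightarrow> (real^3) \<times> real \<Rightarrow> real" where
  "dgam j nu i q = dirderiv (ax3 j, 0) (\<lambda>x. nu x $ i) q"

definition curl_gam :: "((real^3) \<times> real \<Rightarrow> real^3) \<Rightarrow> (real^3) \<times> real \<Rightarrow> real^3" where
  "curl_gam nu q = vector [dgam 2 nu 3 q - dgam 3 nu 2 q,
                           dgam 3 nu 1 q - dgam 1 nu 3 q,
                           dgam 1 nu 2 q - dgam 2 nu 1 q]"

definition ds_vec :: "((real^3) \<times> real \<Rightarrow> real^3) \<Rightarrow> (real^3) \<times> real \<Rightarrow> real^3" where
  "ds_vec nu q = (\<chi> i. dirderiv (0, 1) (\<lambda>x. nu x $ i) q)"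

end

theory Submission
  imports Defs
begin

(* The bracket {f,g} = (grad f)^T Pi (grad g) with Pi antisymmetric satisfies the Jacobi
   identity iff the cyclic tensor  J_abc = sum_l Pi_al d_l Pi_bc + cyclic  vanishes: the
   second-derivative terms of the Jacobiator cancel by symmetry of mixed partials
   (Schwarz), and testing on the coordinate functions extracts J_abc.
   For Pi = Pi_mu the components J_{i,j,3+k} (i,j <= 3) say that each M-derivative
   d_{M_j} mu is parallel to gamma; since 0 is not in D this makes mu constant on the
   hyperplanes {M . gamma = s}, so mu = nu(gamma, M . gamma) with nu = mu o L for the smooth
   section L(gamma, s) = (s/|gamma|^2 gamma, gamma).  Writing mu this way, every J_abc is
   plus or minus the expression  gamma . curl nu + nu . (gamma x d_s nu),  which gives both
   directions. *)

section \<open>Calculus for componentwise smooth functions\<close>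

lemma iterpd_append: "iterpd (bs @ [b]) f = iterpd bs (dirderiv b f)"
  by (induction bs) auto

lemma smooth_onD_cont: "smooth_on U f \<Longrightarrow> continuous_on U f"
  unfolding smooth_on_def by (metis empty_subsetI iterpd.simps(1) list.set(1))

lemma smooth_onD_diff:
  "smooth_on U f \<Longrightarrow> b \<in> Basis \<Longrightarrow> x \<in> U \<Longrightarrow> (\<lambda>t. f (x + t *\<^sub>R b)) differentiable (at 0)"
  unfolding smooth_on_def by (metis empty_subsetI iterpd.simps(1) list.set(1))

lemma smooth_onD_deriv: "smooth_on U f \<Longrightarrow> b \<in> Basis \<Longrightarrow> smooth_on U (dirderiv b f)"
proof -
  assume f: "smooth_on U f" and b: "b \<in> Basis"
  show ?thesis unfolding smooth_on_def
  proof (intro allI impI)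
    fix bs :: "'a list" assume "set bs \<subseteq> Basis"
    then have "set (bs @ [b]) \<subseteq> Basis" using b by auto
    then show "continuous_on U (iterpd bs (dirderiv b f)) \<and>
        (\<forall>c\<in>Basis. \<forall>x\<in>U. (\<lambda>t. iterpd bs (dirderiv b f) (x + t *\<^sub>R c)) differentiable at 0)"
      using f unfolding smooth_on_def iterpd_append[symmetric] by blast
  qed
qed

lemma smooth_on_coind:
  assumes "h \<in> C" and "\<And>h. h \<in> C \<Longrightarrow> continuous_on U h"
    and "\<And>h b x. h \<in> C \<Longrightarrow> b \<in> Basis \<Longrightarrow> x \<in> U \<Longrightarrow> (\<lambda>t. h (x + t *\<^sub>R b)) differentiable (at 0)"
    and "\<And>h b. h \<in> C \<Longrightarrow> b \<in> Basis \<Longrightarrow> dirderiv b h \<in> C"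
  shows "smooth_on U h"
proof -
  have "set bs \<subseteq> Basis \<Longrightarrow> iterpd bs h \<in> C" for bs by (induction bs) (auto simp: assms)
  then show ?thesis unfolding smooth_on_def using assms by auto
qed

lemma dirderiv_DERIV:
  assumes "(\<lambda>t. f (x + t *\<^sub>R v)) differentiable (at 0)"
  shows "((\<lambda>t. f (x + t *\<^sub>R v)) has_real_derivative dirderiv v f x) (at 0)"
  using assms unfolding dirderiv_def by (simp add: DERIV_deriv_iff_real_differentiable)

lemma dirderiv_eqI:
  "((\<lambda>t. f (x + t *\<^sub>R v)) has_real_derivative D) (at 0) \<Longrightarrow> dirderiv v f x = D"
  unfolding dirderiv_def by (rule DERIV_imp_deriv)

lemma dirderiv_DERIV_shift:
  assumes "(\<lambda>t. f ((x + s *\<^sub>R v) + t *\<^sub>R v)) differentiable (at 0)"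
  shows "((\<lambda>t. f (x + t *\<^sub>R v)) has_real_derivative dirderiv v f (x + s *\<^sub>R v)) (at s)"
proof -
  have "((\<lambda>t. f (x + (t + s) *\<^sub>R v)) has_real_derivative dirderiv v f (x + s *\<^sub>R v)) (at 0)"
    using dirderiv_DERIV[OF assms] by (simp add: scaleR_add_left algebra_simps)
  then show ?thesis using DERIV_shift[of "\<lambda>t. f (x + t *\<^sub>R v)" _ 0 s] by simp
qed

lemma line_eventually_in:
  fixes x :: "'a::real_normed_vector"
  assumes "open V" "x \<in> V"
  shows "eventually (\<lambda>t. x + t *\<^sub>R b \<in> V) (nhds (0::real))"
proof -
  have "open ((\<lambda>t::real. x + t *\<^sub>R b) -` V)"
    using assms(1) by (intro open_vimage continuous_intros) auto
  then have "\<forall>\<^sub>F t in nhds 0. t \<in> (\<lambda>t. x + t *\<^sub>R b) -` V"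
    using assms(2) by (intro eventually_nhds_in_open) auto
  then show ?thesis by simp
qed

lemma DERIV_line_cong:
  fixes x :: "'a::real_normed_vector"
  assumes "open V" "x \<in> V" "\<And>y. y \<in> V \<Longrightarrow> h y = h' y"
    and "((\<lambda>t. h (x + t *\<^sub>R b)) has_real_derivative D) (at 0)"
  shows "((\<lambda>t. h' (x + t *\<^sub>R b)) has_real_derivative D) (at 0)"
proof -
  have "eventually (\<lambda>t. h (x + t *\<^sub>R b) = h' (x + t *\<^sub>R b)) (nhds (0::real))"
    using line_eventually_in[OF assms(1,2), of b] by eventually_elim (use assms(3) in auto)
  then show ?thesis
    using assms(4) DERIV_cong_ev[of 0 0 "\<lambda>t. h (x + t *\<^sub>R b)" "\<lambda>t. h' (x + t *\<^sub>R b)" D D] by simp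
qed

lemma dirderiv_cong:
  assumes "open U" "x \<in> U" "\<And>y. y \<in> U \<Longrightarrow> f y = g y"
  shows "dirderiv v f x = dirderiv v g x"
proof -
  have "eventually (\<lambda>t. f (x + t *\<^sub>R v) = g (x + t *\<^sub>R v)) (nhds (0::real))"
    using line_eventually_in[OF assms(1,2), of v] by eventually_elim (use assms in auto)
  then show ?thesis unfolding dirderiv_def by (rule deriv_cong_ev) simp
qed

lemma dirderiv_inner: "dirderiv b (\<lambda>x. x \<bullet> v) y = b \<bullet> v"
  by (rule dirderiv_eqI) (auto simp: inner_add_left intro!: derivative_eq_intros)

lemma MVT_sym:
  fixes \<phi> :: "real \<Rightarrow> real"
  assumes "\<And>x. \<bar>x\<bar> \<le> \<bar>h\<bar> \<Longrightarrow> DERIV \<phi> x :> \<phi>' x"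
  shows "\<exists>\<xi>. \<bar>\<xi>\<bar> \<le> \<bar>h\<bar> \<and> \<phi> h - \<phi> 0 = h * \<phi>' \<xi>"
proof (cases h "0::real" rule: linorder_cases)
  case less
  have "\<exists>z. h < z \<and> z < 0 \<and> \<phi> 0 - \<phi> h = (0 - h) * \<phi>' z"
    by (rule MVT2) (use assms less in auto)
  then obtain z where "h < z" "z < 0" "\<phi> 0 - \<phi> h = (0 - h) * \<phi>' z" by blast
  then show ?thesis by (intro exI[of _ z]) (auto simp: algebra_simps)
next
  case greater
  have "\<exists>z. 0 < z \<and> z < h \<and> \<phi> h - \<phi> 0 = (h - 0) * \<phi>' z"
    by (rule MVT2) (use assms greater in auto)
  then obtain z where "0 < z" "z < h" "\<phi> h - \<phi> 0 = (h - 0) * \<phi>' z" by blast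
  then show ?thesis by (intro exI[of _ z]) auto
qed auto

lemma line_increment_bound:
  fixes f :: "'a::real_normed_vector \<Rightarrow> real"
  assumes d: "\<And>t. \<bar>t\<bar> \<le> \<bar>s\<bar> \<Longrightarrow> (\<lambda>\<tau>. f ((y + t *\<^sub>R c) + \<tau> *\<^sub>R c)) differentiable (at 0)"
    and close: "\<And>t. \<bar>t\<bar> \<le> \<bar>s\<bar> \<Longrightarrow> \<bar>dirderiv c f (y + t *\<^sub>R c) - L\<bar> \<le> e"
  shows "\<bar>f (y + s *\<^sub>R c) - f y - s * L\<bar> \<le> \<bar>s\<bar> * e"
proof -
  have "\<exists>\<xi>. \<bar>\<xi>\<bar> \<le> \<bar>s\<bar> \<and> f (y + s *\<^sub>R c) - f (y + 0 *\<^sub>R c) = s * dirderiv c f (y + \<xi> *\<^sub>R c)"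
    by (rule MVT_sym[where \<phi>="\<lambda>t. f (y + t *\<^sub>R c)" and \<phi>'="\<lambda>t. dirderiv c f (y + t *\<^sub>R c)"])
      (auto intro!: dirderiv_DERIV_shift d)
  then obtain \<xi> where \<xi>: "\<bar>\<xi>\<bar> \<le> \<bar>s\<bar>" "f (y + s *\<^sub>R c) - f y = s * dirderiv c f (y + \<xi> *\<^sub>R c)"
    by auto
  then have "f (y + s *\<^sub>R c) - f y - s * L = s * (dirderiv c f (y + \<xi> *\<^sub>R c) - L)"
    by (simp add: algebra_simps)
  then show ?thesis using close[OF \<xi>(1)] by (simp add: abs_mult mult_left_mono)
qed

lemma norm_proj_le:
  fixes h :: "'a::euclidean_space"
  assumes "B \<subseteq> Basis"
  shows "norm (\<Sum>b\<in>B. (h \<bullet> b) *\<^sub>R b) \<le> real (card B) * norm h"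
proof -
  have "norm (\<Sum>b\<in>B. (h \<bullet> b) *\<^sub>R b) \<le> (\<Sum>b\<in>B. norm ((h \<bullet> b) *\<^sub>R b))" by (rule norm_sum)
  also have "\<dots> \<le> (\<Sum>b\<in>B. norm h)"
    by (intro sum_mono) (use assms in \<open>auto simp: Basis_le_norm\<close>)
  finally show ?thesis by simp
qed

(* Key step of "C^1 implies differentiable": moving successively along the coordinate
   directions in B, the increment of f is its linear part up to o(|h|). *)
lemma coordinate_increment_estimate:
  fixes f :: "'a::euclidean_space \<Rightarrow> real"
  assumes r: "r > 0" "ball x r \<subseteq> U"
    and d: "\<And>b y. b \<in> Basis \<Longrightarrow> y \<in> U \<Longrightarrow> (\<lambda>t. f (y + t *\<^sub>R b)) differentiable (at 0)"
    and c: "\<And>b. b \<in> Basis \<Longrightarrow> isCont (dirderiv b f) x"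
    and B: "finite B" "B \<subseteq> Basis"
  shows "\<forall>e>0. \<exists>d>0. \<forall>h. norm h < d \<longrightarrow>
      \<bar>f (x + (\<Sum>b\<in>B. (h \<bullet> b) *\<^sub>R b)) - f x - (\<Sum>b\<in>B. (h \<bullet> b) * dirderiv b f x)\<bar> \<le> e * norm h"
  using B
proof (induction B rule: finite_induct)
  case empty
  then show ?case by (auto intro!: exI[of _ 1])
next
  case (insert c B)
  show ?case
  proof (intro allI impI)
    fix e :: real assume e: "e > 0"
    have cB: "c \<in> Basis" "B \<subseteq> Basis" using insert.prems by auto
    obtain d1 where d1: "d1 > 0" "\<And>h. norm h < d1 \<Longrightarrow>
       \<bar>f (x + (\<Sum>b\<in>B. (h \<bullet> b) *\<^sub>R b)) - f x - (\<Sum>b\<in>B. (h \<bullet> b) * dirderiv b f x)\<bar> \<le> e/2 * norm h"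
      using insert.IH[OF cB(2)] e by (meson half_gt_zero)
    obtain d2 where d2: "d2 > 0" "\<And>y. dist y x < d2 \<Longrightarrow> dist (dirderiv c f y) (dirderiv c f x) < e/2"
      using c[OF cB(1)] e unfolding continuous_at_eps_delta by (meson half_gt_zero)
    define K where "K = real (card B) + 1"
    have K: "K \<ge> 1" unfolding K_def by simp
    define d where "d = min d1 (min d2 r / K)"
    show "\<exists>d>0. \<forall>h. norm h < d \<longrightarrow>
       \<bar>f (x + (\<Sum>b\<in>insert c B. (h \<bullet> b) *\<^sub>R b)) - f x - (\<Sum>b\<in>insert c B. (h \<bullet> b) * dirderiv b f x)\<bar>
         \<le> e * norm h"
    proof (intro exI[of _ d] conjI allI impI)
      show "d > 0" unfolding d_def using d1 d2 r K by auto
      fix h :: 'a assume h: "norm h < d"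
      define y0 where "y0 = x + (\<Sum>b\<in>B. (h \<bullet> b) *\<^sub>R b)"
      have near: "dist (y0 + t *\<^sub>R c) x < min d2 r" if t: "\<bar>t\<bar> \<le> \<bar>h \<bullet> c\<bar>" for t
      proof -
        have "norm (t *\<^sub>R c) \<le> norm h" using t Basis_le_norm[OF cB(1), of h] cB(1) by simp
        moreover have "dist (y0 + t *\<^sub>R c) x = norm ((\<Sum>b\<in>B. (h \<bullet> b) *\<^sub>R b) + t *\<^sub>R c)"
          unfolding y0_def dist_norm by (simp add: algebra_simps)
        moreover have "K * norm h = real (card B) * norm h + norm h"
          unfolding K_def by (simp add: algebra_simps)
        ultimately have "dist (y0 + t *\<^sub>R c) x \<le> K * norm h"
          using norm_triangle_ineq[of "\<Sum>b\<in>B. (h \<bullet> b) *\<^sub>R b" "t *\<^sub>R c"] norm_proj_le[OF cB(2), of h]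
          by linarith
        also have "\<dots> < K * (min d2 r / K)"
          using h K unfolding d_def by (intro mult_strict_left_mono) auto
        finally show ?thesis using K by simp
      qed
      have inU: "y0 + t *\<^sub>R c \<in> U" if "\<bar>t\<bar> \<le> \<bar>h \<bullet> c\<bar>" for t
        using near[OF that] r(2) by (auto simp: dist_commute)
      have close: "\<bar>dirderiv c f (y0 + t *\<^sub>R c) - dirderiv c f x\<bar> \<le> e/2" if "\<bar>t\<bar> \<le> \<bar>h \<bullet> c\<bar>" for t
        using d2(2)[of "y0 + t *\<^sub>R c"] near[OF that] by (simp add: dist_real_def)
      have line: "\<bar>f (y0 + (h \<bullet> c) *\<^sub>R c) - f y0 - (h \<bullet> c) * dirderiv c f x\<bar> \<le> \<bar>h \<bullet> c\<bar> * (e/2)"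
        by (rule line_increment_bound) (use d cB(1) inU close in auto)
      have rest: "\<bar>f y0 - f x - (\<Sum>b\<in>B. (h \<bullet> b) * dirderiv b f x)\<bar> \<le> e/2 * norm h"
        unfolding y0_def using d1(2)[of h] h unfolding d_def by simp
      have scale: "\<bar>h \<bullet> c\<bar> * (e/2) \<le> norm h * (e/2)"
        using Basis_le_norm[OF cB(1), of h] e by (intro mult_right_mono) auto
      have decomp: "f (x + (\<Sum>b\<in>insert c B. (h \<bullet> b) *\<^sub>R b)) - f x - (\<Sum>b\<in>insert c B. (h \<bullet> b) * dirderiv b f x)
         = (f (y0 + (h \<bullet> c) *\<^sub>R c) - f y0 - (h \<bullet> c) * dirderiv c f x)
           + (f y0 - f x - (\<Sum>b\<in>B. (h \<bullet> b) * dirderiv b f x))"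
        using insert.hyps unfolding y0_def by (simp add: algebra_simps)
      have "norm h * (e/2) + e/2 * norm h = e * norm h" by (simp add: field_simps)
      then show "\<bar>f (x + (\<Sum>b\<in>insert c B. (h \<bullet> b) *\<^sub>R b)) - f x
          - (\<Sum>b\<in>insert c B. (h \<bullet> b) * dirderiv b f x)\<bar> \<le> e * norm h"
        unfolding decomp using line rest scale
          abs_triangle_ineq[of "f (y0 + (h \<bullet> c) *\<^sub>R c) - f y0 - (h \<bullet> c) * dirderiv c f x"
            "f y0 - f x - (\<Sum>b\<in>B. (h \<bullet> b) * dirderiv b f x)"] by linarith
    qed
  qed
qed

lemma C1_frechet:
  fixes f :: "'a::euclidean_space \<Rightarrow> real"
  assumes U: "open U" "x \<in> U"
    and d: "\<And>b y. b \<in> Basis \<Longrightarrow> y \<in> U \<Longrightarrow> (\<lambda>t. f (y + t *\<^sub>R b)) differentiable (at 0)"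
    and c: "\<And>b. b \<in> Basis \<Longrightarrow> continuous_on U (dirderiv b f)"
  shows "(f has_derivative (\<lambda>h. \<Sum>b\<in>Basis. (h \<bullet> b) * dirderiv b f x)) (at x)"
proof -
  obtain r where r: "r > 0" "ball x r \<subseteq> U" using U openE by blast
  have "isCont (dirderiv b f) x" if "b \<in> Basis" for b
    using c[OF that] U continuous_on_eq_continuous_at by blast
  from coordinate_increment_estimate[OF r d this finite_Basis order_refl]
  have est: "\<forall>e>0. \<exists>d>0. \<forall>h. norm h < d \<longrightarrow>
      \<bar>f (x + h) - f x - (\<Sum>b\<in>Basis. (h \<bullet> b) * dirderiv b f x)\<bar> \<le> e * norm h"
    by (simp add: euclidean_representation)
  have lin: "bounded_linear (\<lambda>h. \<Sum>b\<in>Basis. (h \<bullet> b) * dirderiv b f x)"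
    by (intro bounded_linear_sum bounded_linear_mult_const bounded_linear_inner_left)
  show ?thesis unfolding has_derivative_at_alt
  proof (intro conjI lin allI impI)
    fix e :: real assume "e > 0"
    then obtain d where "d > 0" "\<forall>h. norm h < d \<longrightarrow>
      \<bar>f (x + h) - f x - (\<Sum>b\<in>Basis. (h \<bullet> b) * dirderiv b f x)\<bar> \<le> e * norm h" using est by blast
    then show "\<exists>d>0. \<forall>y. norm (y - x) < d \<longrightarrow>
        norm (f y - f x - (\<Sum>b\<in>Basis. ((y - x) \<bullet> b) * dirderiv b f x)) \<le> e * norm (y - x)"
      by (intro exI[of _ d]) (metis add.commute diff_add_cancel real_norm_def)
  qed
qed

lemma C1_chain:
  fixes f :: "'a::euclidean_space \<Rightarrow> real"
  assumes U: "open U" "c t \<in> U"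
    and d: "\<And>b y. b \<in> Basis \<Longrightarrow> y \<in> U \<Longrightarrow> (\<lambda>t. f (y + t *\<^sub>R b)) differentiable (at 0)"
    and cont: "\<And>b. b \<in> Basis \<Longrightarrow> continuous_on U (dirderiv b f)"
    and cd: "(c has_vector_derivative c') (at t)"
  shows "((\<lambda>s. f (c s)) has_real_derivative (\<Sum>b\<in>Basis. (c' \<bullet> b) * dirderiv b f (c t))) (at t)"
proof -
  have "((\<lambda>s. f (c s)) has_derivative (\<lambda>h. \<Sum>b\<in>Basis. (h *\<^sub>R c' \<bullet> b) * dirderiv b f (c t))) (at t)"
    using diff_chain_at[OF cd[unfolded has_vector_derivative_def] C1_frechet[OF U d cont]]
    by (simp add: o_def)
  moreover have "(\<lambda>h. \<Sum>b\<in>Basis. (h *\<^sub>R c' \<bullet> b) * dirderiv b f (c t))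
      = (*) (\<Sum>b\<in>Basis. (c' \<bullet> b) * dirderiv b f (c t))"
    by (auto simp: sum_distrib_left algebra_simps)
  ultimately show ?thesis unfolding has_field_derivative_def by simp
qed

lemma C1_dir:
  fixes f :: "'a::euclidean_space \<Rightarrow> real"
  assumes U: "open U" "x \<in> U"
    and d: "\<And>b y. b \<in> Basis \<Longrightarrow> y \<in> U \<Longrightarrow> (\<lambda>t. f (y + t *\<^sub>R b)) differentiable (at 0)"
    and cont: "\<And>b. b \<in> Basis \<Longrightarrow> continuous_on U (dirderiv b f)"
  shows "((\<lambda>s. f (x + s *\<^sub>R w)) has_real_derivative (\<Sum>b\<in>Basis. (w \<bullet> b) * dirderiv b f x)) (at 0)"
proof -
  have "((\<lambda>s. x + s *\<^sub>R w) has_vector_derivative w) (at 0)"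
    unfolding has_vector_derivative_def by (auto intro!: derivative_eq_intros)
  then show ?thesis using C1_chain[of U "\<lambda>s. x + s *\<^sub>R w" 0 f w, OF U(1) _ d cont] U(2) by simp
qed
lemma second_difference_mvt:
  fixes f :: "'a::euclidean_space \<Rightarrow> real"
  assumes U: "ball x r \<subseteq> U" and a: "norm a \<le> 1" and b: "norm b \<le> 1" and hr: "2 * \<bar>h\<bar> < r"
    and da: "\<And>y. y \<in> U \<Longrightarrow> (\<lambda>t. f (y + t *\<^sub>R a)) differentiable (at 0)"
    and dab: "\<And>y. y \<in> U \<Longrightarrow> (\<lambda>t. dirderiv a f (y + t *\<^sub>R b)) differentiable (at 0)"
  shows "\<exists>\<xi>. norm (\<xi> - x) \<le> 2 * \<bar>h\<bar> \<and>
     f (x + h *\<^sub>R a + h *\<^sub>R b) - f (x + h *\<^sub>R a) - f (x + h *\<^sub>R b) + f x = h * h * dirderiv b (dirderiv a f) \<xi>"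
proof -
  have nrm: "norm ((x + s *\<^sub>R a + t *\<^sub>R b) - x) \<le> 2 * \<bar>h\<bar>" if "\<bar>s\<bar> \<le> \<bar>h\<bar>" "\<bar>t\<bar> \<le> \<bar>h\<bar>" for s t
  proof -
    have "norm ((x + s *\<^sub>R a + t *\<^sub>R b) - x) = norm (s *\<^sub>R a + t *\<^sub>R b)" by (simp add: algebra_simps)
    also have "\<dots> \<le> norm (s *\<^sub>R a) + norm (t *\<^sub>R b)" by (rule norm_triangle_ineq)
    also have "\<dots> = \<bar>s\<bar> * norm a + \<bar>t\<bar> * norm b" by simp
    also have "\<dots> \<le> \<bar>h\<bar> * 1 + \<bar>h\<bar> * 1"
      using that a b by (intro add_mono mult_mono) auto
    finally show ?thesis by simp
  qed
  have pt: "x + s *\<^sub>R a + t *\<^sub>R b \<in> U" if "\<bar>s\<bar> \<le> \<bar>h\<bar>" "\<bar>t\<bar> \<le> \<bar>h\<bar>" for s t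
  proof -
    have "dist x (x + s *\<^sub>R a + t *\<^sub>R b) = norm ((x + s *\<^sub>R a + t *\<^sub>R b) - x)"
      by (simp add: dist_norm norm_minus_commute add.commute)
    then have "dist x (x + s *\<^sub>R a + t *\<^sub>R b) < r"
      using nrm[OF that] hr by linarith
    then show ?thesis using U by auto
  qed
  have "\<exists>\<sigma>. \<bar>\<sigma>\<bar> \<le> \<bar>h\<bar> \<and> (\<lambda>s. f (x + h *\<^sub>R b + s *\<^sub>R a) - f (x + s *\<^sub>R a)) h - (\<lambda>s. f (x + h *\<^sub>R b + s *\<^sub>R a) - f (x + s *\<^sub>R a)) 0
      = h * (dirderiv a f (x + h *\<^sub>R b + \<sigma> *\<^sub>R a) - dirderiv a f (x + \<sigma> *\<^sub>R a))"
  proof (rule MVT_sym)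
    fix s assume s: "\<bar>s\<bar> \<le> \<bar>h\<bar>"
    have p1: "x + h *\<^sub>R b + s *\<^sub>R a \<in> U" using pt[OF s, of h] by (simp add: add_ac)
    have p2: "x + s *\<^sub>R a \<in> U" using pt[OF s, of 0] by simp
    show "((\<lambda>s. f (x + h *\<^sub>R b + s *\<^sub>R a) - f (x + s *\<^sub>R a)) has_real_derivative
       dirderiv a f (x + h *\<^sub>R b + s *\<^sub>R a) - dirderiv a f (x + s *\<^sub>R a)) (at s)"
      by (intro DERIV_diff dirderiv_DERIV_shift da p1 p2)
  qed
  then obtain \<sigma> where \<sigma>: "\<bar>\<sigma>\<bar> \<le> \<bar>h\<bar>"
    "f (x + h *\<^sub>R b + h *\<^sub>R a) - f (x + h *\<^sub>R a) - (f (x + h *\<^sub>R b) - f x)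
      = h * (dirderiv a f (x + h *\<^sub>R b + \<sigma> *\<^sub>R a) - dirderiv a f (x + \<sigma> *\<^sub>R a))" by auto
  have "\<exists>\<tau>. \<bar>\<tau>\<bar> \<le> \<bar>h\<bar> \<and> (\<lambda>t. dirderiv a f (x + \<sigma> *\<^sub>R a + t *\<^sub>R b)) h - (\<lambda>t. dirderiv a f (x + \<sigma> *\<^sub>R a + t *\<^sub>R b)) 0
      = h * dirderiv b (dirderiv a f) (x + \<sigma> *\<^sub>R a + \<tau> *\<^sub>R b)"
  proof (rule MVT_sym)
    fix t assume t: "\<bar>t\<bar> \<le> \<bar>h\<bar>"
    show "((\<lambda>t. dirderiv a f (x + \<sigma> *\<^sub>R a + t *\<^sub>R b)) has_real_derivative
       dirderiv b (dirderiv a f) (x + \<sigma> *\<^sub>R a + t *\<^sub>R b)) (at t)"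
      by (intro dirderiv_DERIV_shift dab pt \<sigma>(1) t)
  qed
  then obtain \<tau> where \<tau>: "\<bar>\<tau>\<bar> \<le> \<bar>h\<bar>"
    "dirderiv a f (x + \<sigma> *\<^sub>R a + h *\<^sub>R b) - dirderiv a f (x + \<sigma> *\<^sub>R a)
      = h * dirderiv b (dirderiv a f) (x + \<sigma> *\<^sub>R a + \<tau> *\<^sub>R b)" by auto
  show ?thesis
  proof (intro exI conjI)
    show "norm ((x + \<sigma> *\<^sub>R a + \<tau> *\<^sub>R b) - x) \<le> 2 * \<bar>h\<bar>" by (rule nrm[OF \<sigma>(1) \<tau>(1)])
    have e1: "x + h *\<^sub>R b + h *\<^sub>R a = x + h *\<^sub>R a + h *\<^sub>R b" "x + h *\<^sub>R b + \<sigma> *\<^sub>R a = x + \<sigma> *\<^sub>R a + h *\<^sub>R b"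
      by (simp_all add: add_ac)
    show "f (x + h *\<^sub>R a + h *\<^sub>R b) - f (x + h *\<^sub>R a) - f (x + h *\<^sub>R b) + f x =
      h * h * dirderiv b (dirderiv a f) (x + \<sigma> *\<^sub>R a + \<tau> *\<^sub>R b)"
      using \<sigma>(2) \<tau>(2) unfolding e1 by (simp add: algebra_simps)
  qed
qed

lemma schwarz:
  fixes f :: "'a::euclidean_space \<Rightarrow> real"
  assumes U: "open U" "x \<in> U" and a: "a \<in> Basis" and b: "b \<in> Basis"
    and da: "\<And>y. y \<in> U \<Longrightarrow> (\<lambda>t. f (y + t *\<^sub>R a)) differentiable (at 0)"
    and db: "\<And>y. y \<in> U \<Longrightarrow> (\<lambda>t. f (y + t *\<^sub>R b)) differentiable (at 0)"
    and dab: "\<And>y. y \<in> U \<Longrightarrow> (\<lambda>t. dirderiv a f (y + t *\<^sub>R b)) differentiable (at 0)"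
    and dba: "\<And>y. y \<in> U \<Longrightarrow> (\<lambda>t. dirderiv b f (y + t *\<^sub>R a)) differentiable (at 0)"
    and cab: "continuous_on U (dirderiv b (dirderiv a f))"
    and cba: "continuous_on U (dirderiv a (dirderiv b f))"
  shows "dirderiv b (dirderiv a f) x = dirderiv a (dirderiv b f) x"
proof (rule ccontr)
  assume ne: "dirderiv b (dirderiv a f) x \<noteq> dirderiv a (dirderiv b f) x"
  define e where "e = \<bar>dirderiv b (dirderiv a f) x - dirderiv a (dirderiv b f) x\<bar> / 2"
  have e: "e > 0" using ne by (simp add: e_def)
  obtain r where r: "r > 0" "ball x r \<subseteq> U" using U openE by blast
  have "isCont (dirderiv b (dirderiv a f)) x" using cab U continuous_on_eq_continuous_at by blast
  then obtain d1 where d1: "d1 > 0" "\<And>y. dist y x < d1 \<Longrightarrow> dist (dirderiv b (dirderiv a f) y) (dirderiv b (dirderiv a f) x) < e"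
    using e unfolding continuous_at_eps_delta by blast
  have "isCont (dirderiv a (dirderiv b f)) x" using cba U continuous_on_eq_continuous_at by blast
  then obtain d2 where d2: "d2 > 0" "\<And>y. dist y x < d2 \<Longrightarrow> dist (dirderiv a (dirderiv b f) y) (dirderiv a (dirderiv b f) x) < e"
    using e unfolding continuous_at_eps_delta by blast
  define h where "h = min r (min d1 d2) / 4"
  have h: "h > 0" "2 * \<bar>h\<bar> < r" "2 * \<bar>h\<bar> < d1" "2 * \<bar>h\<bar> < d2"
    using r d1 d2 by (auto simp: h_def)
  have na: "norm a \<le> 1" "norm b \<le> 1" using a b by auto
  obtain \<xi>1 where \<xi>1: "norm (\<xi>1 - x) \<le> 2 * \<bar>h\<bar>"
    "f (x + h *\<^sub>R a + h *\<^sub>R b) - f (x + h *\<^sub>R a) - f (x + h *\<^sub>R b) + f x = h * h * dirderiv b (dirderiv a f) \<xi>1"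
    using second_difference_mvt[OF r(2) na h(2) da dab] by blast
  obtain \<xi>2 where \<xi>2: "norm (\<xi>2 - x) \<le> 2 * \<bar>h\<bar>"
    "f (x + h *\<^sub>R b + h *\<^sub>R a) - f (x + h *\<^sub>R b) - f (x + h *\<^sub>R a) + f x = h * h * dirderiv a (dirderiv b f) \<xi>2"
    using second_difference_mvt[OF r(2) na(2) na(1) h(2) db dba] by blast
  have sw: "x + h *\<^sub>R b + h *\<^sub>R a = x + h *\<^sub>R a + h *\<^sub>R b" by (simp add: add_ac)
  have "h * h * dirderiv b (dirderiv a f) \<xi>1 = h * h * dirderiv a (dirderiv b f) \<xi>2"
    using \<xi>1(2) \<xi>2(2) unfolding sw by linarith
  then have eq: "dirderiv b (dirderiv a f) \<xi>1 = dirderiv a (dirderiv b f) \<xi>2" using h(1) by simp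
  have c1: "\<bar>dirderiv b (dirderiv a f) \<xi>1 - dirderiv b (dirderiv a f) x\<bar> < e"
    using d1(2)[of \<xi>1] \<xi>1(1) h(3) by (simp add: dist_norm dist_real_def)
  have c2: "\<bar>dirderiv a (dirderiv b f) \<xi>2 - dirderiv a (dirderiv b f) x\<bar> < e"
    using d2(2)[of \<xi>2] \<xi>2(1) h(4) by (simp add: dist_norm dist_real_def)
  show False using c1 c2 eq e_def by (simp add: abs_if split: if_splits)
qed

lemma smooth_on_const: "smooth_on (V::'a::euclidean_space set) (\<lambda>x. c)"
proof (rule smooth_on_coind[where C="range (\<lambda>c. \<lambda>x. c)"])
  fix h :: "'a \<Rightarrow> real" and b assume "h \<in> range (\<lambda>c x. c)"
  then obtain c where h: "h = (\<lambda>x. c)" by auto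
  have "dirderiv b h = (\<lambda>x. 0)" unfolding h dirderiv_def by (simp add: fun_eq_iff)
  then show "dirderiv b h \<in> range (\<lambda>c x. c)" by auto
qed auto

lemma smooth_on_inner: "smooth_on (V::'a::euclidean_space set) (\<lambda>x. x \<bullet> v)"
proof (rule smooth_on_coind[where C="range (\<lambda>v. \<lambda>x. x \<bullet> v) \<union> range (\<lambda>c. \<lambda>x. c)"])
  fix h :: "'a \<Rightarrow> real" and b x assume "h \<in> range (\<lambda>v x. x \<bullet> v) \<union> range (\<lambda>c x. c)"
  then show "(\<lambda>t. h (x + t *\<^sub>R b)) differentiable at 0"
    by (auto simp: inner_add_left intro!: derivative_intros)
next
  fix h :: "'a \<Rightarrow> real" and b assume "h \<in> range (\<lambda>v x. x \<bullet> v) \<union> range (\<lambda>c x. c)"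
  then consider v where "h = (\<lambda>x. x \<bullet> v)" | c where "h = (\<lambda>x. c)" by auto
  then show "dirderiv b h \<in> range (\<lambda>v x. x \<bullet> v) \<union> range (\<lambda>c x. c)"
  proof cases
    case 1
    have "dirderiv b h = (\<lambda>x. b \<bullet> v)" unfolding 1 by (simp add: dirderiv_inner fun_eq_iff)
    then show ?thesis by auto
  next
    case 2
    have "dirderiv b h = (\<lambda>x. 0)" unfolding 2 dirderiv_def by (simp add: fun_eq_iff)
    then show ?thesis by auto
  qed
qed (auto intro!: continuous_intros)

section \<open>A closure class of smooth functions\<close>

(* When phi is smooth, every member is smooth (smooth_closure_smooth). *)
inductive_set smooth_closure ::
    "'a::euclidean_space set \<Rightarrow> ('a \<Rightarrow> 'b::euclidean_space) \<Rightarrow> 'b set \<Rightarrow> ('a \<Rightarrow> real) set"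
  for V \<phi> W where
  base: "smooth_on V h \<Longrightarrow> h \<in> smooth_closure V \<phi> W"
| comp: "smooth_on W k \<Longrightarrow> (\<lambda>x. k (\<phi> x)) \<in> smooth_closure V \<phi> W"
| add: "h1 \<in> smooth_closure V \<phi> W \<Longrightarrow> h2 \<in> smooth_closure V \<phi> W
          \<Longrightarrow> (\<lambda>x. h1 x + h2 x) \<in> smooth_closure V \<phi> W"
| mult: "h1 \<in> smooth_closure V \<phi> W \<Longrightarrow> h2 \<in> smooth_closure V \<phi> W
          \<Longrightarrow> (\<lambda>x. h1 x * h2 x) \<in> smooth_closure V \<phi> W"
| inv: "h \<in> smooth_closure V \<phi> W \<Longrightarrow> (\<forall>x\<in>V. h x \<noteq> 0)
          \<Longrightarrow> (\<lambda>x. inverse (h x)) \<in> smooth_closure V \<phi> W"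
| cong: "h \<in> smooth_closure V \<phi> W \<Longrightarrow> (\<forall>x\<in>V. h x = h' x) \<Longrightarrow> h' \<in> smooth_closure V \<phi> W"

lemma smooth_closure_sum:
  "finite B \<Longrightarrow> (\<And>b. b \<in> B \<Longrightarrow> H b \<in> smooth_closure V \<phi> W)
    \<Longrightarrow> (\<lambda>x. \<Sum>b\<in>B. H b x) \<in> smooth_closure V \<phi> W"
proof (induction B rule: finite_induct)
  case empty
  then show ?case using smooth_closure.base[OF smooth_on_const[of V 0]] by simp
next
  case (insert c B)
  then show ?case using smooth_closure.add[of "H c" V \<phi> W "\<lambda>x. \<Sum>b\<in>B. H b x"] by simp
qed

lemma vec_line_deriv:
  fixes \<phi> :: "'a::euclidean_space \<Rightarrow> 'b::euclidean_space"
  assumes "\<And>b'. b' \<in> Basis \<Longrightarrow> (\<lambda>t. \<phi> (x + t *\<^sub>R b) \<bullet> b') differentiable (at 0)"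
  shows "((\<lambda>t. \<phi> (x + t *\<^sub>R b)) has_vector_derivative
           (\<Sum>b'\<in>Basis. dirderiv b (\<lambda>y. \<phi> y \<bullet> b') x *\<^sub>R b')) (at 0)"
proof -
  have "((\<lambda>t. \<phi> (x + t *\<^sub>R b) \<bullet> b') has_derivative
      (\<lambda>h. (h *\<^sub>R (\<Sum>b'\<in>Basis. dirderiv b (\<lambda>y. \<phi> y \<bullet> b') x *\<^sub>R b')) \<bullet> b')) (at 0)"
    if b': "b' \<in> Basis" for b'
  proof -
    have "((\<lambda>t. \<phi> (x + t *\<^sub>R b) \<bullet> b') has_real_derivative dirderiv b (\<lambda>y. \<phi> y \<bullet> b') x) (at 0)"
      using dirderiv_DERIV[of "\<lambda>y. \<phi> y \<bullet> b'", OF assms[OF b']] by simp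
    moreover have "(\<lambda>h. (h *\<^sub>R (\<Sum>b'\<in>Basis. dirderiv b (\<lambda>y. \<phi> y \<bullet> b') x *\<^sub>R b')) \<bullet> b')
        = (*) (dirderiv b (\<lambda>y. \<phi> y \<bullet> b') x)"
      using b' by (auto simp: fun_eq_iff)
    ultimately show ?thesis unfolding has_field_derivative_def by simp
  qed
  then show ?thesis unfolding has_vector_derivative_def
    by (subst has_derivative_componentwise_within) auto
qed

lemma smooth_closure_stepI:
  fixes h :: "'a::euclidean_space \<Rightarrow> real"
  assumes "continuous_on V h"
    and "\<And>b x. b \<in> Basis \<Longrightarrow> x \<in> V \<Longrightarrow> ((\<lambda>t. h (x + t *\<^sub>R b)) has_real_derivative D b x) (at 0)"
    and "\<And>b. b \<in> Basis \<Longrightarrow> D b \<in> smooth_closure V \<phi> W"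
  shows "continuous_on V h \<and> (\<forall>b\<in>Basis. \<forall>x\<in>V. (\<lambda>t. h (x + t *\<^sub>R b)) differentiable (at 0))
     \<and> (\<forall>b\<in>Basis. dirderiv b h \<in> smooth_closure V \<phi> W)"
proof (intro conjI ballI assms(1))
  fix b x :: 'a assume "b \<in> Basis" "x \<in> V"
  then show "(\<lambda>t. h (x + t *\<^sub>R b)) differentiable (at 0)"
    using assms(2) real_differentiable_def by blast
next
  fix b :: 'a assume b: "b \<in> Basis"
  show "dirderiv b h \<in> smooth_closure V \<phi> W"
    by (rule smooth_closure.cong[OF assms(3)[OF b]]) (use assms(2) b in \<open>auto intro: dirderiv_eqI[symmetric]\<close>)
qed

lemma smooth_closure_C1:
  fixes V :: "'a::euclidean_space set" and W :: "'b::euclidean_space set"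
  assumes V: "open V" and W: "open W" and \<phi>W: "\<And>x. x \<in> V \<Longrightarrow> \<phi> x \<in> W"
    and \<phi>s: "\<And>b'. b' \<in> Basis \<Longrightarrow> smooth_on V (\<lambda>x. \<phi> x \<bullet> b')"
  shows "h \<in> smooth_closure V \<phi> W \<Longrightarrow> continuous_on V h
     \<and> (\<forall>b\<in>Basis. \<forall>x\<in>V. (\<lambda>t. h (x + t *\<^sub>R b)) differentiable (at 0))
     \<and> (\<forall>b\<in>Basis. dirderiv b h \<in> smooth_closure V \<phi> W)"
proof (induction h rule: smooth_closure.induct)
  case (base h)
  then show ?case using smooth_onD_cont smooth_onD_diff smooth_onD_deriv smooth_closure.base by blast
next
  case (comp k)
  have \<phi>cont: "continuous_on V \<phi>"
  proof -
    have "continuous_on V (\<lambda>x. \<Sum>b'\<in>Basis. (\<phi> x \<bullet> b') *\<^sub>R b')"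
      using \<phi>s smooth_onD_cont by (intro continuous_on_sum continuous_on_scaleR continuous_on_const) blast+
    then show ?thesis by (simp add: euclidean_representation)
  qed
  have kd: "\<And>b y. b \<in> Basis \<Longrightarrow> y \<in> W \<Longrightarrow> (\<lambda>t. k (y + t *\<^sub>R b)) differentiable (at 0)"
    using smooth_onD_diff[OF comp] by blast
  have kc: "\<And>b. b \<in> Basis \<Longrightarrow> continuous_on W (dirderiv b k)"
    using smooth_onD_cont[OF smooth_onD_deriv[OF comp]] by blast
  show ?case
  proof (rule smooth_closure_stepI)
    show "continuous_on V (\<lambda>x. k (\<phi> x))"
      by (rule continuous_on_compose2[OF smooth_onD_cont[OF comp] \<phi>cont]) (use \<phi>W in auto)
  next
    fix b x :: 'a assume b: "b \<in> Basis" and x: "x \<in> V"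
    have "((\<lambda>t. \<phi> (x + t *\<^sub>R b)) has_vector_derivative
        (\<Sum>b'\<in>Basis. dirderiv b (\<lambda>y. \<phi> y \<bullet> b') x *\<^sub>R b')) (at 0)"
    proof (rule vec_line_deriv)
      fix b' :: 'b assume "b' \<in> Basis"
      show "(\<lambda>t. \<phi> (x + t *\<^sub>R b) \<bullet> b') differentiable (at 0)"
        using smooth_onD_diff[OF \<phi>s[OF \<open>b' \<in> Basis\<close>] b x] by simp
    qed
    from C1_chain[OF W _ kd kc this] \<phi>W[OF x]
    show "((\<lambda>t. k (\<phi> (x + t *\<^sub>R b))) has_real_derivative
      (\<Sum>b'\<in>Basis. dirderiv b (\<lambda>y. \<phi> y \<bullet> b') x * dirderiv b' k (\<phi> x))) (at 0)"
      by simp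
  next
    fix b :: 'a assume "b \<in> Basis"
    then show "(\<lambda>x. \<Sum>b'\<in>Basis. dirderiv b (\<lambda>y. \<phi> y \<bullet> b') x * dirderiv b' k (\<phi> x)) \<in> smooth_closure V \<phi> W"
      by (intro smooth_closure_sum finite_Basis smooth_closure.mult smooth_closure.base
          smooth_closure.comp smooth_onD_deriv[OF \<phi>s] smooth_onD_deriv[OF comp])
  qed
next
  case (add h1 h2)
  show ?case
  proof (rule smooth_closure_stepI)
    show "continuous_on V (\<lambda>x. h1 x + h2 x)" using add.IH by (intro continuous_intros) auto
    show "((\<lambda>t. h1 (x + t *\<^sub>R b) + h2 (x + t *\<^sub>R b)) has_real_derivative
        dirderiv b h1 x + dirderiv b h2 x) (at 0)" if "b \<in> Basis" "x \<in> V" for b x :: 'a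
      using add.IH that by (intro DERIV_add dirderiv_DERIV) auto
    show "(\<lambda>x. dirderiv b h1 x + dirderiv b h2 x) \<in> smooth_closure V \<phi> W" if "b \<in> Basis" for b :: 'a
      using add.IH that by (intro smooth_closure.add) auto
  qed
next
  case (mult h1 h2)
  show ?case
  proof (rule smooth_closure_stepI)
    show "continuous_on V (\<lambda>x. h1 x * h2 x)" using mult.IH by (intro continuous_intros) auto
    show "((\<lambda>t. h1 (x + t *\<^sub>R b) * h2 (x + t *\<^sub>R b)) has_real_derivative
        dirderiv b h1 x * h2 x + h1 x * dirderiv b h2 x) (at 0)" if "b \<in> Basis" "x \<in> V" for b x :: 'a
      using DERIV_mult[OF dirderiv_DERIV dirderiv_DERIV, of h1 x b h2] mult.IH that
      by (auto simp: mult.commute)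
    show "(\<lambda>x. dirderiv b h1 x * h2 x + h1 x * dirderiv b h2 x) \<in> smooth_closure V \<phi> W"
      if "b \<in> Basis" for b :: 'a
      using mult.IH mult.hyps that by (intro smooth_closure.add smooth_closure.mult) auto
  qed
next
  case (inv h)
  show ?case
  proof (rule smooth_closure_stepI)
    show "continuous_on V (\<lambda>x. inverse (h x))" using inv.IH inv.hyps by (intro continuous_intros) auto
    show "((\<lambda>t. inverse (h (x + t *\<^sub>R b))) has_real_derivative
        (-1) * (dirderiv b h x * (inverse (h x) * inverse (h x)))) (at 0)" if "b \<in> Basis" "x \<in> V" for b x :: 'a
      using DERIV_inverse_fun[OF dirderiv_DERIV, of h x b] inv.IH inv.hyps that
      by (auto simp: power2_eq_square inverse_mult_distrib)
    show "(\<lambda>x. (-1) * (dirderiv b h x * (inverse (h x) * inverse (h x)))) \<in> smooth_closure V \<phi> W"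
      if "b \<in> Basis" for b :: 'a
      using inv.IH that
      by (intro smooth_closure.mult smooth_closure.inv smooth_closure.base[OF smooth_on_const] inv.hyps) auto
  qed
next
  case (cong h h')
  show ?case
  proof (rule smooth_closure_stepI)
    show "continuous_on V h'" using cong.IH cong.hyps continuous_on_cong by blast
    show "((\<lambda>t. h' (x + t *\<^sub>R b)) has_real_derivative dirderiv b h x) (at 0)"
      if "b \<in> Basis" "x \<in> V" for b x :: 'a
      by (rule DERIV_line_cong[OF V that(2), of h]) (use cong.IH cong.hyps that in \<open>auto intro: dirderiv_DERIV\<close>)
    show "dirderiv b h \<in> smooth_closure V \<phi> W" if "b \<in> Basis" for b :: 'a
      using cong.IH that by blast
  qed
qed

theorem smooth_closure_smooth:
  fixes V :: "'a::euclidean_space set" and W :: "'b::euclidean_space set"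
  assumes "open V" and "open W" and "\<And>x. x \<in> V \<Longrightarrow> \<phi> x \<in> W"
    and "\<And>b'. b' \<in> Basis \<Longrightarrow> smooth_on V (\<lambda>x. \<phi> x \<bullet> b')"
    and h: "h \<in> smooth_closure V \<phi> W"
  shows "smooth_on V h"
  by (rule smooth_on_coind[where C="smooth_closure V \<phi> W", OF h])
    (use smooth_closure_C1[OF assms(1-4)] in blast)+

section \<open>The algebraic Jacobiator identity\<close>

lemma sum4_perm_a: "(\<Sum>k\<in>S. \<Sum>l\<in>S. \<Sum>i\<in>S. \<Sum>j\<in>S. f k l i j) = (\<Sum>i\<in>S. \<Sum>j\<in>S. \<Sum>l\<in>S. \<Sum>k\<in>S. f k l i j)"
  unfolding sum.cartesian_product
  by (rule sum.reindex_bij_witness[where i="\<lambda>(i,j,l,k). (k,l,i,j)" and j="\<lambda>(k,l,i,j). (i,j,l,k)"]) auto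

lemma sum4_perm_b: "(\<Sum>k\<in>S. \<Sum>l\<in>S. \<Sum>i\<in>S. \<Sum>j\<in>S. f k l i j) = (\<Sum>k\<in>S. \<Sum>i\<in>S. \<Sum>j\<in>S. \<Sum>l\<in>S. f k l i j)"
  unfolding sum.cartesian_product
  by (rule sum.reindex_bij_witness[where i="\<lambda>(k,i,j,l). (k,l,i,j)" and j="\<lambda>(k,l,i,j). (k,i,j,l)"]) auto

lemma sum4_perm_c: "(\<Sum>k\<in>S. \<Sum>l\<in>S. \<Sum>i\<in>S. \<Sum>j\<in>S. f k l i j) = (\<Sum>j\<in>S. \<Sum>k\<in>S. \<Sum>i\<in>S. \<Sum>l\<in>S. f k l i j)"
  unfolding sum.cartesian_product
  by (rule sum.reindex_bij_witness[where i="\<lambda>(j,k,i,l). (k,l,i,j)" and j="\<lambda>(k,l,i,j). (j,k,i,l)"]) auto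

lemma sum4_perm_d: "(\<Sum>k\<in>S. \<Sum>l\<in>S. \<Sum>i\<in>S. \<Sum>j\<in>S. f k l i j) = (\<Sum>i\<in>S. \<Sum>j\<in>S. \<Sum>k\<in>S. \<Sum>l\<in>S. f k l i j)"
  unfolding sum.cartesian_product
  by (rule sum.reindex_bij_witness[where i="\<lambda>(i,j,k,l). (k,l,i,j)" and j="\<lambda>(k,l,i,j). (i,j,k,l)"]) auto

(* dbracket S P dP X X2 Y Y2 l is the l-th partial derivative of the bracket
   sum_ij X_i P_ij Y_j, given the partials X2, dP, Y2 of its three factors. *)
definition dbracket :: "nat set \<Rightarrow> (nat \<Rightarrow> nat \<Rightarrow> real) \<Rightarrow> (nat \<Rightarrow> nat \<Rightarrow> nat \<Rightarrow> real) \<Rightarrow> (nat \<Rightarrow> real) \<Rightarrow> (nat \<Rightarrow> nat \<Rightarrow> real) \<Rightarrow> (nat \<Rightarrow> real) \<Rightarrow> (nat \<Rightarrow> nat \<Rightarrow> real) \<Rightarrow> nat \<Rightarrow> real" where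
  "dbracket S P dP X X2 Y Y2 l = (\<Sum>i\<in>S. \<Sum>j\<in>S. X2 l i * P i j * Y j + X i * dP l i j * Y j + X i * P i j * Y2 l j)"

(* The second-derivative terms of the Jacobiator cancel in pairs: antisymmetry of P
   against symmetry of the Hessian Y2. *)
lemma hessian_terms_cancel:
  assumes P: "\<And>i j. i \<in> S \<Longrightarrow> j \<in> S \<Longrightarrow> P i j = - P j i"
    and Y: "\<And>i j. i \<in> S \<Longrightarrow> j \<in> S \<Longrightarrow> Y2 i j = Y2 j i"
  shows "(\<Sum>k\<in>S. \<Sum>l\<in>S. \<Sum>i\<in>S. \<Sum>j\<in>S. X k * P k l * (Y2 l i * P i j * (Z j::real)))
       + (\<Sum>k\<in>S. \<Sum>l\<in>S. \<Sum>i\<in>S. \<Sum>j\<in>S. Z k * P k l * (X i * P i j * Y2 l j)) = 0"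
proof -
  have A: "(\<Sum>k\<in>S. \<Sum>l\<in>S. \<Sum>i\<in>S. \<Sum>j\<in>S. Z k * P k l * (X i * P i j * Y2 l j))
      = (\<Sum>i\<in>S. \<Sum>j\<in>S. \<Sum>l\<in>S. \<Sum>k\<in>S. Z k * P k l * (X i * P i j * Y2 l j))"
    by (rule sum4_perm_a)
  have pw: "X i * P i j * (Y2 j l * P l k * Z k) = - (Z k * P k l * (X i * P i j * Y2 l j))"
    if "i \<in> S" "j \<in> S" "l \<in> S" "k \<in> S" for i j l k
  proof -
    have "P l k = - P k l" "Y2 j l = Y2 l j" using P[OF that(3,4)] Y[OF that(2,3)] by auto
    then show ?thesis by (simp add: algebra_simps)
  qed
  have B: "(\<Sum>k\<in>S. \<Sum>l\<in>S. \<Sum>i\<in>S. \<Sum>j\<in>S. X k * P k l * (Y2 l i * P i j * Z j))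
      = (\<Sum>i\<in>S. \<Sum>j\<in>S. \<Sum>l\<in>S. \<Sum>k\<in>S. - (Z k * P k l * (X i * P i j * Y2 l j)))"
    by (intro sum.cong refl) (simp add: pw)
  have C: "(\<Sum>i\<in>S. \<Sum>j\<in>S. \<Sum>l\<in>S. \<Sum>k\<in>S. - (Z k * P k l * (X i * P i j * Y2 l j)))
     = - (\<Sum>i\<in>S. \<Sum>j\<in>S. \<Sum>l\<in>S. \<Sum>k\<in>S. Z k * P k l * (X i * P i j * Y2 l j))"
    by (simp only: sum_negf)
  show ?thesis using A B C by linarith
qed

lemma jacobiator_algebraic:
  assumes P: "\<And>i j. i \<in> S \<Longrightarrow> j \<in> S \<Longrightarrow> P i j = - P j i"
    and F2: "\<And>i j. i \<in> S \<Longrightarrow> j \<in> S \<Longrightarrow> F2 i j = F2 j i"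
    and G2: "\<And>i j. i \<in> S \<Longrightarrow> j \<in> S \<Longrightarrow> G2 i j = G2 j i"
    and H2: "\<And>i j. i \<in> S \<Longrightarrow> j \<in> S \<Longrightarrow> H2 i j = H2 j i"
  shows "(\<Sum>k\<in>S. \<Sum>l\<in>S. F k * P k l * dbracket S P dP G G2 H H2 l)
       + (\<Sum>k\<in>S. \<Sum>l\<in>S. G k * P k l * dbracket S P dP H H2 F F2 l)
       + (\<Sum>k\<in>S. \<Sum>l\<in>S. H k * P k l * dbracket S P dP F F2 G G2 l)
       = (\<Sum>a\<in>S. \<Sum>b\<in>S. \<Sum>c\<in>S. F a * G b * H c *
            (\<Sum>l\<in>S. P a l * dP l b c + P b l * dP l c a + P c l * dP l a b))"
proof -
  define T1 where "T1 X Y2 Z = (\<Sum>k\<in>S. \<Sum>l\<in>S. \<Sum>i\<in>S. \<Sum>j\<in>S. X k * P k l * (Y2 l i * P i j * Z j))" for X Y2 Z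
  define T2 where "T2 X Y Z = (\<Sum>k\<in>S. \<Sum>l\<in>S. \<Sum>i\<in>S. \<Sum>j\<in>S. X k * P k l * (Y i * dP l i j * Z j))" for X Y Z
  define T3 where "T3 X Y Z2 = (\<Sum>k\<in>S. \<Sum>l\<in>S. \<Sum>i\<in>S. \<Sum>j\<in>S. X k * P k l * (Y i * P i j * Z2 l j))" for X Y Z2
  have exp: "(\<Sum>k\<in>S. \<Sum>l\<in>S. X k * P k l * dbracket S P dP Y Y2 Z Z2 l) = T1 X Y2 Z + T2 X Y Z + T3 X Y Z2" for X Y Y2 Z Z2
  proof -
    have "X k * P k l * dbracket S P dP Y Y2 Z Z2 l = (\<Sum>i\<in>S. \<Sum>j\<in>S. X k * P k l * (Y2 l i * P i j * Z j))
       + (\<Sum>i\<in>S. \<Sum>j\<in>S. X k * P k l * (Y i * dP l i j * Z j))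
       + (\<Sum>i\<in>S. \<Sum>j\<in>S. X k * P k l * (Y i * P i j * Z2 l j))" for k l
      unfolding dbracket_def by (simp only: sum.distrib distrib_left sum_distrib_left)
    then show ?thesis unfolding T1_def T2_def T3_def by (simp only: sum.distrib)
  qed
  have c1: "T1 F G2 H + T3 H F G2 = 0" unfolding T1_def T3_def by (rule hessian_terms_cancel[OF P G2])
  have c2: "T1 G H2 F + T3 F G H2 = 0" unfolding T1_def T3_def by (rule hessian_terms_cancel[OF P H2])
  have c3: "T1 H F2 G + T3 G H F2 = 0" unfolding T1_def T3_def by (rule hessian_terms_cancel[OF P F2])
  have r1: "T2 F G H = (\<Sum>a\<in>S. \<Sum>b\<in>S. \<Sum>c\<in>S. \<Sum>l\<in>S. F a * G b * H c * (P a l * dP l b c))"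
    unfolding T2_def by (subst sum4_perm_b) (intro sum.cong refl, simp only: ac_simps)
  have r2: "T2 G H F = (\<Sum>a\<in>S. \<Sum>b\<in>S. \<Sum>c\<in>S. \<Sum>l\<in>S. F a * G b * H c * (P b l * dP l c a))"
    unfolding T2_def by (subst sum4_perm_c) (intro sum.cong refl, simp only: ac_simps)
  have r3: "T2 H F G = (\<Sum>a\<in>S. \<Sum>b\<in>S. \<Sum>c\<in>S. \<Sum>l\<in>S. F a * G b * H c * (P c l * dP l a b))"
    unfolding T2_def by (subst sum4_perm_d) (intro sum.cong refl, simp only: ac_simps)
  have rhs: "(\<Sum>a\<in>S. \<Sum>b\<in>S. \<Sum>c\<in>S. F a * G b * H c *
            (\<Sum>l\<in>S. P a l * dP l b c + P b l * dP l c a + P c l * dP l a b))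
     = (\<Sum>a\<in>S. \<Sum>b\<in>S. \<Sum>c\<in>S. \<Sum>l\<in>S. F a * G b * H c * (P a l * dP l b c))
     + (\<Sum>a\<in>S. \<Sum>b\<in>S. \<Sum>c\<in>S. \<Sum>l\<in>S. F a * G b * H c * (P b l * dP l c a))
     + (\<Sum>a\<in>S. \<Sum>b\<in>S. \<Sum>c\<in>S. \<Sum>l\<in>S. F a * G b * H c * (P c l * dP l a b))"
    by (simp only: sum_distrib_left sum.distrib distrib_left)
  show ?thesis unfolding exp rhs r1[symmetric] r2[symmetric] r3[symmetric]
    using c1 c2 c3 by linarith
qed

lemma e6_simps: "e6 1 = (axis 1 1, 0)" "e6 2 = (axis 2 1, 0)" "e6 3 = (axis 3 1, 0)"
  "e6 4 = (0, axis 1 1)" "e6 5 = (0, axis 2 1)" "e6 6 = (0, axis 3 1)" "e6 (Suc 0) = (axis 1 1, 0)"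
  by (simp_all add: e6_def ax3_def)

lemma axis_comps: "(axis 1 1 :: real^3) $ 1 = 1" "(axis 1 1 :: real^3) $ 2 = 0" "(axis 1 1 :: real^3) $ 3 = 0"
  "(axis 2 1 :: real^3) $ 1 = 0" "(axis 2 1 :: real^3) $ 2 = 1" "(axis 2 1 :: real^3) $ 3 = 0"
  "(axis 3 1 :: real^3) $ 1 = 0" "(axis 3 1 :: real^3) $ 2 = 0" "(axis 3 1 :: real^3) $ 3 = 1"
  by (simp_all add: axis_def)

lemma Basis_vec3: "(Basis :: (real^3) set) = {axis 1 1, axis 2 1, axis 3 1}"
  by (auto simp: Basis_vec_def UNIV_3)

lemma sum_Basis_vec3: "(\<Sum>b\<in>(Basis::(real^3) set). F b) = F (axis 1 1) + F (axis 2 1) + F (axis 3 1)"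
  unfolding Basis_vec3 by (simp add: axis_eq_axis add.assoc)

lemma sum_Basis_prod:
  fixes F :: "('a::euclidean_space \<times> 'b::euclidean_space) \<Rightarrow> real"
  shows "sum F Basis = (\<Sum>u\<in>Basis. F (u, 0)) + (\<Sum>v\<in>Basis. F (0, v))"
proof -
  have "inj_on (\<lambda>u. (u::'a, 0::'b)) Basis" "inj_on (\<lambda>u. (0::'a, u::'b)) Basis"
    by (auto intro!: inj_onI Pair_inject)
  thus ?thesis
    unfolding Basis_prod_def
    by (subst sum.union_disjoint) (auto simp: Basis_prod_def sum.reindex)
qed

lemma sum6: "(\<Sum>k=1..6. G k) = G 1 + G 2 + G 3 + G 4 + G 5 + G 6"
  for G :: "nat \<Rightarrow> 'a::comm_monoid_add"
  by (simp add: eval_nat_numeral atLeastAtMostSuc_conv add_ac)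

lemma sum_Basis6: "(\<Sum>b\<in>(Basis::((real^3) \<times> (real^3)) set). F b) = (\<Sum>k=1..6. F (e6 k))" for F :: "_ \<Rightarrow> real"
  unfolding sum6 by (subst sum_Basis_prod) (simp add: sum_Basis_vec3 e6_simps add_ac)

lemma e6_Basis: "k \<in> {1..6} \<Longrightarrow> e6 k \<in> Basis"
  by (auto simp: e6_def ax3_def Basis_prod_def Basis_vec_def)

lemma in6: "k \<in> {1..6} \<longleftrightarrow> k = 1 \<or> k = 2 \<or> k = 3 \<or> k = 4 \<or> k = 5 \<or> k = (6::nat)"
  by auto

section \<open>The Jacobi tensor of Pi_mu\<close>

definition dmu :: "((real^3) \<times> (real^3) \<Rightarrow> real^3) \<Rightarrow> (real^3) \<times> (real^3) \<Rightarrow> nat \<Rightarrow> real^3" where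
  "dmu mu p l = (\<chi> m. dirderiv (e6 l) (\<lambda>q. mu q $ m) p)"

(* Partial derivative of the matrix Pi_mu along the l-th coordinate: Pi is affine in
   (M + mu, gamma), so it is Pi_0 evaluated at the derivative of that pair. *)
definition dPi :: "((real^3) \<times> (real^3) \<Rightarrow> real^3) \<Rightarrow> (real^3) \<times> (real^3) \<Rightarrow> nat \<Rightarrow> nat \<Rightarrow> nat \<Rightarrow> real" where
  "dPi mu p l i j = PiMat (\<lambda>_. 0) (fst (e6 l) + dmu mu p l, snd (e6 l)) i j"

lemma PiMat_shift: "PiMat mu q i j = PiMat (\<lambda>_. 0) (fst q + mu q, snd q) i j"
  by (simp add: PiMat_def Let_def)

lemma PiMat_antisym: "i \<in> {1..6} \<Longrightarrow> j \<in> {1..6} \<Longrightarrow> PiMat mu q i j = - PiMat mu q j i"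
  unfolding in6 by (elim disjE) (simp_all add: PiMat_def Let_def)

(* Pi_0 depends linearly on its arguments, so it commutes with differentiation. *)
lemma PiMat0_deriv:
  assumes "i \<in> {1..6}" "j \<in> {1..6}"
    and A: "\<And>m. ((\<lambda>t. A t $ m) has_real_derivative A' $ m) (at 0)"
    and B: "\<And>m. ((\<lambda>t. B t $ m) has_real_derivative B' $ m) (at 0)"
  shows "((\<lambda>t. PiMat (\<lambda>_. 0) (A t, B t) i j) has_real_derivative PiMat (\<lambda>_. 0) (A', B') i j) (at 0)"
  using assms(1,2) unfolding in6
  by (elim disjE) (simp_all add: PiMat_def Let_def, auto intro!: derivative_eq_intros A B)

lemma PiMat_line_deriv:
  assumes l: "l \<in> {1..6}" and ij: "i \<in> {1..6}" "j \<in> {1..6}"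
    and mud: "\<And>m. (\<lambda>t. mu (p + t *\<^sub>R e6 l) $ m) differentiable (at 0)"
  shows "((\<lambda>t. PiMat mu (p + t *\<^sub>R e6 l) i j) has_real_derivative dPi mu p l i j) (at 0)"
proof -
  have A: "((\<lambda>t. (fst (p + t *\<^sub>R e6 l) + mu (p + t *\<^sub>R e6 l)) $ m) has_real_derivative (fst (e6 l) + dmu mu p l) $ m) (at 0)" for m
  proof -
    have eq: "(\<lambda>t. (fst (p + t *\<^sub>R e6 l) + mu (p + t *\<^sub>R e6 l)) $ m) = (\<lambda>t. fst p $ m + t * fst (e6 l) $ m + mu (p + t *\<^sub>R e6 l) $ m)"
      by (simp add: fun_eq_iff)
    have D: "((\<lambda>t. mu (p + t *\<^sub>R e6 l) $ m) has_real_derivative dmu mu p l $ m) (at 0)"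
      unfolding dmu_def using dirderiv_DERIV[OF mud[of m]] by simp
    show ?thesis unfolding eq by (auto intro!: derivative_eq_intros D)
  qed
  have B: "((\<lambda>t. snd (p + t *\<^sub>R e6 l) $ m) has_real_derivative snd (e6 l) $ m) (at 0)" for m
  proof -
    have eq: "(\<lambda>t. snd (p + t *\<^sub>R e6 l) $ m) = (\<lambda>t. snd p $ m + t * snd (e6 l) $ m)"
      by (simp add: fun_eq_iff)
    show ?thesis unfolding eq by (auto intro!: derivative_eq_intros)
  qed
  show ?thesis unfolding PiMat_shift[of mu] dPi_def
    by (rule PiMat0_deriv[OF ij A B])
qed

lemma pbracket_deriv:
  assumes G: "\<And>i. i \<in> {1..6} \<Longrightarrow> ((\<lambda>t. grad6 g (p + t *\<^sub>R e) i) has_real_derivative G' i) (at 0)"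
    and H: "\<And>i. i \<in> {1..6} \<Longrightarrow> ((\<lambda>t. grad6 h (p + t *\<^sub>R e) i) has_real_derivative H' i) (at 0)"
    and P: "\<And>i j. i \<in> {1..6} \<Longrightarrow> j \<in> {1..6} \<Longrightarrow> ((\<lambda>t. PiMat mu (p + t *\<^sub>R e) i j) has_real_derivative P' i j) (at 0)"
  shows "dirderiv e (pbracket mu g h) p = (\<Sum>i=1..6. \<Sum>j=1..6. G' i * PiMat mu p i j * grad6 h p j
      + grad6 g p i * P' i j * grad6 h p j + grad6 g p i * PiMat mu p i j * H' j)"
proof -
  have trm: "((\<lambda>t. grad6 g (p + t *\<^sub>R e) i * PiMat mu (p + t *\<^sub>R e) i j * grad6 h (p + t *\<^sub>R e) j)
     has_real_derivative G' i * PiMat mu p i j * grad6 h p j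
      + grad6 g p i * P' i j * grad6 h p j + grad6 g p i * PiMat mu p i j * H' j) (at 0)"
    if "i \<in> {1..6}" "j \<in> {1..6}" for i j
    using DERIV_mult[OF DERIV_mult[OF G[OF that(1)] P[OF that]] H[OF that(2)]] by (simp add: algebra_simps)
  have "((\<lambda>t. pbracket mu g h (p + t *\<^sub>R e)) has_real_derivative
     (\<Sum>i=1..6. \<Sum>j=1..6. G' i * PiMat mu p i j * grad6 h p j
      + grad6 g p i * P' i j * grad6 h p j + grad6 g p i * PiMat mu p i j * H' j)) (at 0)"
    unfolding pbracket_def by (intro DERIV_sum trm)
  then show ?thesis unfolding dirderiv_def by (rule DERIV_imp_deriv)
qed

definition hess6 :: "((real^3) \<times> (real^3) \<Rightarrow> real) \<Rightarrow> (real^3) \<times> (real^3) \<Rightarrow> nat \<Rightarrow> nat \<Rightarrow> real" where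
  "hess6 f p l i = dirderiv (e6 l) (\<lambda>q. grad6 f q i) p"

definition jtensor :: "((real^3) \<times> (real^3) \<Rightarrow> real^3) \<Rightarrow> (real^3) \<times> (real^3) \<Rightarrow> nat \<Rightarrow> nat \<Rightarrow> nat \<Rightarrow> real" where
  "jtensor mu p a b c = (\<Sum>l=1..6. PiMat mu p a l * dPi mu p l b c + PiMat mu p b l * dPi mu p l c a + PiMat mu p c l * dPi mu p l a b)"

lemma grad6_eq: "(\<lambda>q. grad6 f q i) = dirderiv (e6 i) f"
  by (simp add: fun_eq_iff grad6_def)

lemma grad_line:
  assumes "smooth_on U f" "p \<in> U" "l \<in> {1..6}" "i \<in> {1..6}"
  shows "((\<lambda>t. grad6 f (p + t *\<^sub>R e6 l) i) has_real_derivative hess6 f p l i) (at 0)"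
proof -
  have s: "smooth_on U (dirderiv (e6 i) f)" using smooth_onD_deriv[OF assms(1) e6_Basis[OF assms(4)]] .
  have "(\<lambda>t. dirderiv (e6 i) f (p + t *\<^sub>R e6 l)) differentiable (at 0)"
    using smooth_onD_diff[OF s e6_Basis[OF assms(3)] assms(2)] .
  from dirderiv_DERIV[OF this] show ?thesis unfolding hess6_def grad6_eq by (simp add: grad6_def)
qed

lemma hess6_sym:
  assumes "open U" "smooth_on U f" "p \<in> U" "l \<in> {1..6}" "i \<in> {1..6}"
  shows "hess6 f p l i = hess6 f p i l"
proof -
  have a: "e6 i \<in> Basis" and b: "e6 l \<in> Basis" using assms(4,5) by (auto intro: e6_Basis)
  have sa: "smooth_on U (dirderiv (e6 i) f)" and sb: "smooth_on U (dirderiv (e6 l) f)"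
    using smooth_onD_deriv[OF assms(2)] a b by auto
  have "dirderiv (e6 l) (dirderiv (e6 i) f) p = dirderiv (e6 i) (dirderiv (e6 l) f) p"
  proof (rule schwarz[OF assms(1,3) a b])
    show "\<And>y. y \<in> U \<Longrightarrow> (\<lambda>t. f (y + t *\<^sub>R e6 i)) differentiable at 0"
      using smooth_onD_diff[OF assms(2) a] .
    show "\<And>y. y \<in> U \<Longrightarrow> (\<lambda>t. f (y + t *\<^sub>R e6 l)) differentiable at 0"
      using smooth_onD_diff[OF assms(2) b] .
    show "\<And>y. y \<in> U \<Longrightarrow> (\<lambda>t. dirderiv (e6 i) f (y + t *\<^sub>R e6 l)) differentiable at 0"
      using smooth_onD_diff[OF sa b] .
    show "\<And>y. y \<in> U \<Longrightarrow> (\<lambda>t. dirderiv (e6 l) f (y + t *\<^sub>R e6 i)) differentiable at 0"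
      using smooth_onD_diff[OF sb a] .
    show "continuous_on U (dirderiv (e6 l) (dirderiv (e6 i) f))"
      using smooth_onD_cont[OF smooth_onD_deriv[OF sa b]] .
    show "continuous_on U (dirderiv (e6 i) (dirderiv (e6 l) f))"
      using smooth_onD_cont[OF smooth_onD_deriv[OF sb a]] .
  qed
  then show ?thesis unfolding hess6_def grad6_eq .
qed

lemma grad_pbracket:
  assumes "smooth_vec_on U mu" "smooth_on U g" "smooth_on U h" "p \<in> U" "l \<in> {1..6}"
  shows "grad6 (pbracket mu g h) p l = dbracket {1..6} (PiMat mu p) (dPi mu p) (grad6 g p) (hess6 g p) (grad6 h p) (hess6 h p) l"
proof -
  have mud: "(\<lambda>t. mu (p + t *\<^sub>R e6 l) $ m) differentiable (at 0)" for m
    using smooth_onD_diff[of U "\<lambda>q. mu q $ m", OF _ e6_Basis[OF assms(5)] assms(4)] assms(1)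
    unfolding smooth_vec_on_def by auto
  show ?thesis unfolding grad6_def[of "pbracket mu g h"] dbracket_def
    by (rule pbracket_deriv[where e="e6 l"], rule grad_line[OF assms(2,4,5)], assumption,
        rule grad_line[OF assms(3,4,5)], assumption, rule PiMat_line_deriv[OF assms(5) _ _ mud])
qed

theorem jacobiator_expand:
  assumes U: "open U" "p \<in> U" and mu: "smooth_vec_on U mu"
    and f: "smooth_on U f" and g: "smooth_on U g" and h: "smooth_on U h"
  shows "pbracket mu f (pbracket mu g h) p + pbracket mu g (pbracket mu h f) p + pbracket mu h (pbracket mu f g) p
    = (\<Sum>a=1..6. \<Sum>b=1..6. \<Sum>c=1..6. grad6 f p a * grad6 g p b * grad6 h p c * jtensor mu p a b c)"
proof -
  have e: "pbracket mu X (pbracket mu Y Z) p = (\<Sum>k=1..6. \<Sum>l=1..6. grad6 X p k * PiMat mu p k l *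
      dbracket {1..6} (PiMat mu p) (dPi mu p) (grad6 Y p) (hess6 Y p) (grad6 Z p) (hess6 Z p) l)"
    if "smooth_on U Y" "smooth_on U Z" for X Y Z
    unfolding pbracket_def[of mu X] using grad_pbracket[OF mu that U(2)] by simp
  show ?thesis
    unfolding e[OF g h] e[OF h f] e[OF f g] jtensor_def
    by (rule jacobiator_algebraic) (auto intro: PiMat_antisym hess6_sym[OF U(1) f U(2)] hess6_sym[OF U(1) g U(2)] hess6_sym[OF U(1) h U(2)])
qed

lemma e6_inner: "i \<in> {1..6} \<Longrightarrow> a \<in> {1..6} \<Longrightarrow> e6 i \<bullet> e6 a = (if i = a then 1 else 0)"
  unfolding in6 by (elim disjE) (simp_all add: e6_simps inner_axis inner_axis' axis_comps)

lemma sum_delta3: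
  fixes a b c :: nat
  assumes "a \<in> {1..6}" "b \<in> {1..6}" "c \<in> {1..6}"
  shows "(\<Sum>a'=1..6. \<Sum>b'=1..6. \<Sum>c'=1..6. (if a' = a then 1 else 0) * (if b' = b then 1 else 0)
            * (if c' = c then 1 else 0) * (F a' b' c' :: real)) = F a b c"
proof -
  have delta: "(\<Sum>i=1..6. (if i = k then 1 else 0) * (G i::real)) = G k" if "k \<in> {1..6}" for k :: nat and G
  proof -
    have "(\<lambda>i. (if i = k then 1 else 0) * G i) = (\<lambda>i. if i = k then G k else 0)" by auto
    then show ?thesis using that by (simp only: sum.delta finite_atLeastAtMost if_True)
  qed
  have "(\<Sum>a'=1..6. \<Sum>b'=1..6. \<Sum>c'=1..6. (if a' = a then 1 else 0) * (if b' = b then 1 else 0)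
            * (if c' = c then 1 else 0) * F a' b' c')
     = (\<Sum>a'=1..6. (if a' = a then 1 else 0) * (\<Sum>b'=1..6. (if b' = b then 1 else 0)
            * (\<Sum>c'=1..6. (if c' = c then 1 else 0) * F a' b' c')))"
    by (simp only: sum_distrib_left mult.assoc)
  also have "\<dots> = F a b c" using assms by (simp only: delta)
  finally show ?thesis .
qed

definition jtensor_vanishes ::
    "((real^3) \<times> (real^3)) set \<Rightarrow> ((real^3) \<times> (real^3) \<Rightarrow> real^3) \<Rightarrow> bool" where
  "jtensor_vanishes U mu \<longleftrightarrow>
     (\<forall>p\<in>U. \<forall>a\<in>{1..6}. \<forall>b\<in>{1..6}. \<forall>c\<in>{1..6}. jtensor mu p a b c = 0)"

(* Jacobi identity for Pi_mu is equivalent to the vanishing of its Jacobi tensor;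
   the Jacobi tensor is recovered by testing on the coordinate functions. *)
theorem jacobi_on_iff_jtensor:
  assumes U: "open U" and mu: "smooth_vec_on U mu"
  shows "jacobi_on U mu \<longleftrightarrow> jtensor_vanishes U mu"
  unfolding jtensor_vanishes_def
proof
  assume J: "jacobi_on U mu"
  show "\<forall>p\<in>U. \<forall>a\<in>{1..6}. \<forall>b\<in>{1..6}. \<forall>c\<in>{1..6}. jtensor mu p a b c = 0"
  proof (intro ballI)
    fix p and a b c :: nat assume p: "p \<in> U" and abc: "a \<in> {1..6}" "b \<in> {1..6}" "c \<in> {1..6}"
    let ?x = "\<lambda>a q. q \<bullet> e6 a"
    have sm: "smooth_on U (?x k)" for k by (rule smooth_on_inner)
    have gr: "grad6 (?x k) p i = (if i = k then 1 else 0)" if "i \<in> {1..6}" "k \<in> {1..6}" for i k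
      unfolding grad6_def dirderiv_inner using e6_inner[OF that] .
    have "0 = pbracket mu (?x a) (pbracket mu (?x b) (?x c)) p + pbracket mu (?x b) (pbracket mu (?x c) (?x a)) p
        + pbracket mu (?x c) (pbracket mu (?x a) (?x b)) p"
      using J p sm unfolding jacobi_on_def by simp
    also have "\<dots> = (\<Sum>a'=1..6. \<Sum>b'=1..6. \<Sum>c'=1..6.
        grad6 (?x a) p a' * grad6 (?x b) p b' * grad6 (?x c) p c' * jtensor mu p a' b' c')"
      by (rule jacobiator_expand[OF U p mu sm sm sm])
    also have "\<dots> = (\<Sum>a'=1..6. \<Sum>b'=1..6. \<Sum>c'=1..6. (if a' = a then 1 else 0)
        * (if b' = b then 1 else 0) * (if c' = c then 1 else 0) * jtensor mu p a' b' c')"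
      using gr abc by (intro sum.cong refl) simp
    also have "\<dots> = jtensor mu p a b c" by (rule sum_delta3[OF abc])
    finally show "jtensor mu p a b c = 0" by simp
  qed
next
  assume "\<forall>p\<in>U. \<forall>a\<in>{1..6}. \<forall>b\<in>{1..6}. \<forall>c\<in>{1..6}. jtensor mu p a b c = 0"
  then show "jacobi_on U mu"
    unfolding jacobi_on_def using jacobiator_expand[OF U _ mu] by simp
qed

section \<open>The Jacobi tensor for mu factoring through (gamma, M . gamma)\<close>

lemma open_Omega: "open D \<Longrightarrow> open {p::('a::topological_space \<times> 'b::topological_space). snd p \<in> D}"
  using open_vimage_snd[of D] by (simp add: vimage_def)

lemma open_V: "open D \<Longrightarrow> open {p::('a::topological_space \<times> 'b::topological_space). fst p \<in> D}"
  using open_vimage_fst[of D] by (simp add: vimage_def)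

lemma sum_Basis_V: "(\<Sum>b\<in>(Basis::((real^3) \<times> real) set). F b) = F (axis 1 1, 0) + F (axis 2 1, 0) + F (axis 3 1, 0) + F (0, 1)"
  for F :: "_ \<Rightarrow> real"
  by (subst sum_Basis_prod) (simp add: sum_Basis_vec3)

lemma e6_fs_inner: "l \<in> {1..6} \<Longrightarrow> fst (e6 l) \<bullet> snd (e6 l) = 0"
  unfolding in6 by (elim disjE) (simp_all add: e6_simps)

(* Along the coordinate lines of R^6 the quantity M . gamma moves linearly. *)
lemma dmu_factored_gen:
  fixes nu :: "(real^3) \<times> real \<Rightarrow> real^3"
  assumes D: "open D" and nus: "smooth_vec_on {q. fst q \<in> D} nu"
    and rel: "\<And>M g. g \<in> D \<Longrightarrow> mu (M, g) = nu (g, M \<bullet> g)"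
    and p: "snd p \<in> D" and l: "l \<in> {1..6}"
  shows "dmu mu p l $ i = (\<Sum>b\<in>Basis. ((snd (e6 l), fst (e6 l) \<bullet> snd p + fst p \<bullet> snd (e6 l)) \<bullet> b)
            * dirderiv b (\<lambda>q. nu q $ i) (snd p, fst p \<bullet> snd p))"
proof -
  let ?V = "{q::(real^3) \<times> real. fst q \<in> D}"
  let ?w = "(snd (e6 l), fst (e6 l) \<bullet> snd p + fst p \<bullet> snd (e6 l))"
  have si: "smooth_on ?V (\<lambda>q. nu q $ i)" using nus unfolding smooth_vec_on_def by auto
  have C: "((\<lambda>t. nu ((snd p, fst p \<bullet> snd p) + t *\<^sub>R ?w) $ i) has_real_derivative
      (\<Sum>b\<in>Basis. (?w \<bullet> b) * dirderiv b (\<lambda>q. nu q $ i) (snd p, fst p \<bullet> snd p))) (at 0)"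
    using C1_dir[of ?V "(snd p, fst p \<bullet> snd p)" "\<lambda>q. nu q $ i" ?w] open_V[OF D] p
      smooth_onD_diff[OF si] smooth_onD_cont[OF smooth_onD_deriv[OF si]] by auto
  have eq1: "dmu mu p l $ i = dirderiv (e6 l) (\<lambda>q. nu (snd q, fst q \<bullet> snd q) $ i) p"
    unfolding dmu_def by (simp, rule dirderiv_cong[OF open_Omega[OF D]]) (use p rel in \<open>auto simp: prod_eq_iff\<close>)
  have fe: "(\<lambda>t. nu (snd (p + t *\<^sub>R e6 l), fst (p + t *\<^sub>R e6 l) \<bullet> snd (p + t *\<^sub>R e6 l)) $ i)
      = (\<lambda>t. nu ((snd p, fst p \<bullet> snd p) + t *\<^sub>R ?w) $ i)"
  proof
    fix t
    have "fst (p + t *\<^sub>R e6 l) \<bullet> snd (p + t *\<^sub>R e6 l) = fst p \<bullet> snd p + t * (fst (e6 l) \<bullet> snd p + fst p \<bullet> snd (e6 l))"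
      using e6_fs_inner[OF l] by (simp add: inner_add_left inner_add_right algebra_simps)
    then show "nu (snd (p + t *\<^sub>R e6 l), fst (p + t *\<^sub>R e6 l) \<bullet> snd (p + t *\<^sub>R e6 l)) $ i
      = nu ((snd p, fst p \<bullet> snd p) + t *\<^sub>R ?w) $ i" by simp
  qed
  show ?thesis unfolding eq1 dirderiv_def[of "e6 l"] fe by (rule DERIV_imp_deriv[OF C])
qed

lemma dmu_factored:
  fixes nu :: "(real^3) \<times> real \<Rightarrow> real^3"
  assumes D: "open D" and nus: "smooth_vec_on {q. fst q \<in> D} nu"
    and rel: "\<And>M g. g \<in> D \<Longrightarrow> mu (M, g) = nu (g, M \<bullet> g)"
    and p: "snd p \<in> D"
  shows "dmu mu p 1 = snd p $ 1 *\<^sub>R ds_vec nu (snd p, fst p \<bullet> snd p)"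
    "dmu mu p 2 = snd p $ 2 *\<^sub>R ds_vec nu (snd p, fst p \<bullet> snd p)"
    "dmu mu p 3 = snd p $ 3 *\<^sub>R ds_vec nu (snd p, fst p \<bullet> snd p)"
    "dmu mu p 4 = (\<chi> i. dgam 1 nu i (snd p, fst p \<bullet> snd p)) + fst p $ 1 *\<^sub>R ds_vec nu (snd p, fst p \<bullet> snd p)"
    "dmu mu p 5 = (\<chi> i. dgam 2 nu i (snd p, fst p \<bullet> snd p)) + fst p $ 2 *\<^sub>R ds_vec nu (snd p, fst p \<bullet> snd p)"
    "dmu mu p 6 = (\<chi> i. dgam 3 nu i (snd p, fst p \<bullet> snd p)) + fst p $ 3 *\<^sub>R ds_vec nu (snd p, fst p \<bullet> snd p)"
  using dmu_factored_gen[OF assms] unfolding vec_eq_iff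
  by (simp_all add: sum_Basis_V e6_simps inner_axis inner_axis' axis_comps ds_vec_def dgam_def ax3_def)

(* The scalar that every nonzero Jacobi tensor entry equals up to sign, written in terms
   of gamma, mu, d_s nu and the three gamma-derivatives of nu. *)
definition reduced_jacobi_expr :: "real^3 \<Rightarrow> real^3 \<Rightarrow> real^3 \<Rightarrow> real^3 \<Rightarrow> real^3 \<Rightarrow> real^3 \<Rightarrow> real" where
  "reduced_jacobi_expr g m Ns N1 N2 N3 = g$1 * (N2$3 - N3$2) + g$2 * (N3$1 - N1$3) + g$3 * (N1$2 - N2$1)
     + m$1 * (g$2 * Ns$3 - g$3 * Ns$2) + m$2 * (g$3 * Ns$1 - g$1 * Ns$3) + m$3 * (g$1 * Ns$2 - g$2 * Ns$1)"

lemma jtensor_shape: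
  assumes D1: "dmu mu p 1 = snd p $ 1 *\<^sub>R Ns" and D2: "dmu mu p 2 = snd p $ 2 *\<^sub>R Ns"
    and D3: "dmu mu p 3 = snd p $ 3 *\<^sub>R Ns" and D4: "dmu mu p 4 = N1 + fst p $ 1 *\<^sub>R Ns"
    and D5: "dmu mu p 5 = N2 + fst p $ 2 *\<^sub>R Ns" and D6: "dmu mu p 6 = N3 + fst p $ 3 *\<^sub>R Ns"
    and abc: "a \<in> {1..6}" "b \<in> {1..6}" "c \<in> {1..6}"
  shows "jtensor mu p a b c =
    (if (a,b,c) \<in> {(1,2,3),(2,3,1),(3,1,2)} then - reduced_jacobi_expr (snd p) (mu p) Ns N1 N2 N3
     else if (a,b,c) \<in> {(1,3,2),(3,2,1),(2,1,3)} then reduced_jacobi_expr (snd p) (mu p) Ns N1 N2 N3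
     else 0)"
proof -
  have D1': "dmu mu p (Suc 0) = snd p $ 1 *\<^sub>R Ns" using D1 by simp
  show ?thesis
    using abc unfolding in6 jtensor_def sum6 dPi_def reduced_jacobi_expr_def
    by (elim disjE) (simp_all add: PiMat_def Let_def e6_simps axis_comps D1 D1' D2 D3 D4 D5 D6 algebra_simps)
qed

definition jacobi_expr :: "((real^3) \<times> real \<Rightarrow> real^3) \<Rightarrow> real^3 \<Rightarrow> real \<Rightarrow> real" where
  "jacobi_expr nu g s = g \<bullet> curl_gam nu (g, s) + nu (g, s) \<bullet> cross3 g (ds_vec nu (g, s))"

lemma reduced_jacobi_expr_nu:
  "reduced_jacobi_expr g (nu (g,s)) (ds_vec nu (g,s)) (\<chi> i. dgam 1 nu i (g,s)) (\<chi> i. dgam 2 nu i (g,s))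
     (\<chi> i. dgam 3 nu i (g,s)) = jacobi_expr nu g s"
  unfolding reduced_jacobi_expr_def jacobi_expr_def curl_gam_def cross3_def inner_vec_def sum_3
  by (simp add: algebra_simps)

theorem jtensor_factored:
  fixes nu :: "(real^3) \<times> real \<Rightarrow> real^3"
  assumes D: "open D" and nus: "smooth_vec_on {q. fst q \<in> D} nu"
    and rel: "\<And>M g. g \<in> D \<Longrightarrow> mu (M, g) = nu (g, M \<bullet> g)"
    and p: "snd p \<in> D" and abc: "a \<in> {1..6}" "b \<in> {1..6}" "c \<in> {1..6}"
  shows "jtensor mu p a b c =
    (if (a,b,c) \<in> {(1,2,3),(2,3,1),(3,1,2)} then - jacobi_expr nu (snd p) (fst p \<bullet> snd p)
     else if (a,b,c) \<in> {(1,3,2),(3,2,1),(2,1,3)} then jacobi_expr nu (snd p) (fst p \<bullet> snd p)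
     else 0)"
proof -
  have mup: "mu p = nu (snd p, fst p \<bullet> snd p)" using rel[OF p, of "fst p"] by simp
  show ?thesis
    using jtensor_shape[OF dmu_factored[OF D nus rel p] abc]
    unfolding mup reduced_jacobi_expr_nu .
qed

section \<open>Necessity: mu factors through (gamma, M . gamma)\<close>

lemma jtensor_mixed:
  shows "jtensor mu p 1 2 4 = dmu mu p 2 $ 3 * snd p $ 3 - dmu mu p 3 $ 3 * snd p $ 2"
    "jtensor mu p 1 2 5 = - dmu mu p 1 $ 3 * snd p $ 3 + dmu mu p 3 $ 3 * snd p $ 1"
    "jtensor mu p 1 2 6 = dmu mu p 1 $ 3 * snd p $ 2 - dmu mu p 2 $ 3 * snd p $ 1"
    "jtensor mu p 1 3 4 = - dmu mu p 2 $ 2 * snd p $ 3 + dmu mu p 3 $ 2 * snd p $ 2"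
    "jtensor mu p 1 3 5 = dmu mu p 1 $ 2 * snd p $ 3 - dmu mu p 3 $ 2 * snd p $ 1"
    "jtensor mu p 1 3 6 = - dmu mu p 1 $ 2 * snd p $ 2 + dmu mu p 2 $ 2 * snd p $ 1"
    "jtensor mu p 2 3 4 = dmu mu p 2 $ 1 * snd p $ 3 - dmu mu p 3 $ 1 * snd p $ 2"
    "jtensor mu p 2 3 5 = - dmu mu p 1 $ 1 * snd p $ 3 + dmu mu p 3 $ 1 * snd p $ 1"
    "jtensor mu p 2 3 6 = dmu mu p 1 $ 1 * snd p $ 2 - dmu mu p 2 $ 1 * snd p $ 1"
  unfolding jtensor_def sum6 dPi_def
  by (simp_all add: PiMat_def Let_def e6_simps axis_comps algebra_simps)

lemma parallel_orthogonal: fixes g1 g2 g3 d1 d2 d3 w1 w2 w3 :: real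
  assumes "g1 \<noteq> 0 \<or> g2 \<noteq> 0 \<or> g3 \<noteq> 0" "g3*d2 = g2*d3" "g3*d1 = g1*d3" "g2*d1 = g1*d2" "w1*g1 + w2*g2 + w3*g3 = 0"
  shows "w1*d1 + w2*d2 + w3*d3 = 0"
proof -
  have e1: "g1 * (w1*d1 + w2*d2 + w3*d3) = d1 * (w1*g1 + w2*g2 + w3*g3)" using assms(2-4) by algebra
  have e2: "g2 * (w1*d1 + w2*d2 + w3*d3) = d2 * (w1*g1 + w2*g2 + w3*g3)" using assms(2-4) by algebra
  have e3: "g3 * (w1*d1 + w2*d2 + w3*d3) = d3 * (w1*g1 + w2*g2 + w3*g3)" using assms(2-4) by algebra
  show ?thesis using assms(1,5) e1 e2 e3 by auto
qed

lemma dmu_parallel_gamma: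
  assumes T: "\<And>a b c. a \<in> {1..6} \<Longrightarrow> b \<in> {1..6} \<Longrightarrow> c \<in> {1..6} \<Longrightarrow> jtensor mu q a b c = 0"
  shows "snd q $ 3 * dmu mu q 2 $ m = snd q $ 2 * dmu mu q 3 $ m"
    "snd q $ 3 * dmu mu q 1 $ m = snd q $ 1 * dmu mu q 3 $ m"
    "snd q $ 2 * dmu mu q 1 $ m = snd q $ 1 * dmu mu q 2 $ m"
proof -
  have m: "m = 1 \<or> m = 2 \<or> m = 3" using exhaust_3 by blast
  have j: "jtensor mu q 1 2 4 = 0" "jtensor mu q 1 2 5 = 0" "jtensor mu q 1 2 6 = 0"
    "jtensor mu q 1 3 4 = 0" "jtensor mu q 1 3 5 = 0" "jtensor mu q 1 3 6 = 0"
    "jtensor mu q 2 3 4 = 0" "jtensor mu q 2 3 5 = 0" "jtensor mu q 2 3 6 = 0"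
    by (rule T; simp)+
  show "snd q $ 3 * dmu mu q 2 $ m = snd q $ 2 * dmu mu q 3 $ m"
    "snd q $ 3 * dmu mu q 1 $ m = snd q $ 1 * dmu mu q 3 $ m"
    "snd q $ 2 * dmu mu q 1 $ m = snd q $ 1 * dmu mu q 2 $ m"
    using m j unfolding jtensor_mixed by (auto simp: algebra_simps)
qed

lemma mu_deriv_along_M:
  assumes D: "open D" and mus: "smooth_vec_on {p. snd p \<in> D} mu" and gD: "g \<in> D"
  shows "((\<lambda>t. mu (M + t *\<^sub>R w, g) $ i) has_real_derivative
     w $ 1 * dmu mu (M + t *\<^sub>R w, g) 1 $ i + w $ 2 * dmu mu (M + t *\<^sub>R w, g) 2 $ i
       + w $ 3 * dmu mu (M + t *\<^sub>R w, g) 3 $ i) (at t)"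
proof -
  have si: "smooth_on {p. snd p \<in> D} (\<lambda>p. mu p $ i)" using mus unfolding smooth_vec_on_def by auto
  have cd: "((\<lambda>t. (M + t *\<^sub>R w, g)) has_vector_derivative (w, 0)) (at t)"
    unfolding has_vector_derivative_def by (auto intro!: derivative_eq_intros)
  have "((\<lambda>t. mu (M + t *\<^sub>R w, g) $ i) has_real_derivative
      (\<Sum>b\<in>Basis. ((w, 0) \<bullet> b) * dirderiv b (\<lambda>p. mu p $ i) (M + t *\<^sub>R w, g))) (at t)"
    by (rule C1_chain[OF open_Omega[OF D] _ _ _ cd])
      (use gD smooth_onD_diff[OF si] smooth_onD_cont[OF smooth_onD_deriv[OF si]] in auto)
  moreover have "(\<Sum>b\<in>Basis. ((w, 0) \<bullet> b) * dirderiv b (\<lambda>p. mu p $ i) (M + t *\<^sub>R w, g))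
      = w $ 1 * dmu mu (M + t *\<^sub>R w, g) 1 $ i + w $ 2 * dmu mu (M + t *\<^sub>R w, g) 2 $ i
        + w $ 3 * dmu mu (M + t *\<^sub>R w, g) 3 $ i"
    unfolding sum_Basis6 sum6 dmu_def by (simp add: e6_simps inner_axis inner_axis')
  ultimately show ?thesis by simp
qed

(* Hence mu is constant on each hyperplane {M . gamma = const} (gamma fixed, nonzero):
   along such a segment the derivative of mu combines the M-derivatives with coefficients
   orthogonal to gamma. *)
lemma mu_constant_on_hyperplanes:
  assumes D: "open D" and D0: "0 \<notin> D" and mus: "smooth_vec_on {p. snd p \<in> D} mu"
    and T: "jtensor_vanishes {p. snd p \<in> D} mu" and gD: "g \<in> D" and Mg: "M \<bullet> g = M' \<bullet> g"
  shows "mu (M, g) = mu (M', g)"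
proof -
  define w where "w = M' - M"
  have g0: "g $ 1 \<noteq> 0 \<or> g $ 2 \<noteq> 0 \<or> g $ 3 \<noteq> 0"
  proof (rule ccontr)
    assume "\<not> ?thesis"
    then have "g = 0" unfolding vec_eq_iff using exhaust_3 by (metis zero_index)
    then show False using gD D0 by simp
  qed
  have wg: "w $ 1 * g $ 1 + w $ 2 * g $ 2 + w $ 3 * g $ 3 = 0"
    using Mg unfolding w_def inner_vec_def sum_3 by (simp add: algebra_simps)
  have "((\<lambda>t. mu (M + t *\<^sub>R w, g) $ i) has_real_derivative 0) (at t)" for i t
  proof -
    have "w $ 1 * dmu mu (M + t *\<^sub>R w, g) 1 $ i + w $ 2 * dmu mu (M + t *\<^sub>R w, g) 2 $ i
        + w $ 3 * dmu mu (M + t *\<^sub>R w, g) 3 $ i = 0"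
    proof (rule parallel_orthogonal[OF g0 _ _ _ wg])
      have "jtensor mu (M + t *\<^sub>R w, g) a b c = 0" if "a \<in> {1..6}" "b \<in> {1..6}" "c \<in> {1..6}" for a b c
        using T gD that unfolding jtensor_vanishes_def by simp
      from dmu_parallel_gamma[OF this, of i]
      show "g $ 3 * dmu mu (M + t *\<^sub>R w, g) 2 $ i = g $ 2 * dmu mu (M + t *\<^sub>R w, g) 3 $ i"
        "g $ 3 * dmu mu (M + t *\<^sub>R w, g) 1 $ i = g $ 1 * dmu mu (M + t *\<^sub>R w, g) 3 $ i"
        "g $ 2 * dmu mu (M + t *\<^sub>R w, g) 1 $ i = g $ 1 * dmu mu (M + t *\<^sub>R w, g) 2 $ i"
        by simp_all
    qed
    then show ?thesis using mu_deriv_along_M[OF D mus gD, of M w i t] by simp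
  qed
  then have "mu (M + 1 *\<^sub>R w, g) $ i = mu (M + 0 *\<^sub>R w, g) $ i" for i
    using DERIV_isconst_all by blast
  then show ?thesis unfolding vec_eq_iff w_def by simp
qed

(* A smooth right inverse of (M, gamma) |-> (gamma, M . gamma) on gamma <> 0. *)
definition lift :: "(real^3) \<times> real \<Rightarrow> (real^3) \<times> (real^3)" where
  "lift q = ((snd q / (fst q \<bullet> fst q)) *\<^sub>R fst q, fst q)"

lemma lift_section: "g \<noteq> 0 \<Longrightarrow> snd (lift (g, s)) = g \<and> fst (lift (g, s)) \<bullet> g = s"
  by (simp add: lift_def)

lemma sq3: "x \<bullet> x = x$1*x$1 + x$2*x$2 + x$3*(x$3::real)" for x :: "real^3"
  by (simp add: inner_vec_def sum_3)

lemma Basis_p6_cases: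
  assumes "(b::(real^3) \<times> (real^3)) \<in> Basis"
  shows "b = (axis 1 1, 0) \<or> b = (axis 2 1, 0) \<or> b = (axis 3 1, 0) \<or> b = (0, axis 1 1) \<or> b = (0, axis 2 1) \<or> b = (0, axis 3 1)"
  using assms unfolding Basis_prod_def Basis_vec3 by auto

(* The lift is smooth on gamma <> 0: its coordinates are polynomials in (gamma, s) divided
   by the non-vanishing |gamma|^2. *)
lemma lift_smooth:
  assumes D: "open D" and D0: "0 \<notin> D" and b: "b \<in> Basis"
  shows "smooth_on {q. fst q \<in> D} (\<lambda>q. lift q \<bullet> b)"
proof -
  let ?V = "{q::(real^3) \<times> real. fst q \<in> D}"
  let ?S = "smooth_closure ?V (\<lambda>x. x) (UNIV :: ((real^3) \<times> real) set)"
  have co: "(\<lambda>q. q \<bullet> v) \<in> ?S" for v by (rule smooth_closure.base[OF smooth_on_inner])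
  have c3: "(\<lambda>q::(real^3) \<times> real. q \<bullet> (axis j 1, 0)) = (\<lambda>q. fst q $ j)" for j
    by (auto simp: fun_eq_iff inner_prod_def inner_axis)
  have cs: "(\<lambda>q::(real^3) \<times> real. q \<bullet> (0, 1)) = (\<lambda>q. snd q)"
    by (auto simp: fun_eq_iff inner_prod_def)
  have fj: "(\<lambda>q::(real^3) \<times> real. fst q $ j) \<in> ?S" for j using co[of "(axis j 1, 0)"] unfolding c3 .
  have sn: "(\<lambda>q::(real^3) \<times> real. snd q) \<in> ?S" using co[of "(0, 1)"] unfolding cs .
  have nn: "(\<lambda>q::(real^3) \<times> real. fst q $ 1 * fst q $ 1 + fst q $ 2 * fst q $ 2 + fst q $ 3 * fst q $ 3) \<in> ?S"
    by (intro smooth_closure.add smooth_closure.mult fj)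
  have nz: "\<forall>x\<in>?V. fst x $ 1 * fst x $ 1 + fst x $ 2 * fst x $ 2 + fst x $ 3 * fst x $ 3 \<noteq> 0"
  proof
    fix x assume "x \<in> ?V"
    then have "fst x \<noteq> 0" using D0 by auto
    then have "fst x \<bullet> fst x \<noteq> 0" by simp
    then show "fst x $ 1 * fst x $ 1 + fst x $ 2 * fst x $ 2 + fst x $ 3 * fst x $ 3 \<noteq> 0"
      unfolding inner_vec_def sum_3 by simp
  qed
  have ij: "(\<lambda>q::(real^3) \<times> real. snd q * fst q $ j * inverse (fst q $ 1 * fst q $ 1 + fst q $ 2 * fst q $ 2 + fst q $ 3 * fst q $ 3)) \<in> ?S" for j
    by (intro smooth_closure.mult smooth_closure.inv sn fj nn nz)
  have ax: "(\<lambda>q. lift q \<bullet> (axis j 1, 0)) \<in> ?S" for j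
    by (rule smooth_closure.cong[OF ij[of j]]) (auto simp: lift_def inner_axis sq3 divide_inverse)
  have ax2: "(\<lambda>q. lift q \<bullet> (0, axis j 1)) \<in> ?S" for j
    using fj[of j] by (simp add: lift_def inner_axis)
  have mem: "(\<lambda>q. lift q \<bullet> b) \<in> ?S"
    using Basis_p6_cases[OF b] ax ax2 by auto
  show ?thesis
    by (rule smooth_closure_smooth[OF open_V[OF D] open_UNIV _ _ mem]) (use smooth_on_inner in auto)
qed

lemma smooth_vec_on_comp_lift:
  assumes D: "open D" and D0: "0 \<notin> D" and mus: "smooth_vec_on {p. snd p \<in> D} mu"
  shows "smooth_vec_on {q. fst q \<in> D} (\<lambda>q. mu (lift q))"
  unfolding smooth_vec_on_def
proof
  fix i
  have "smooth_on {p. snd p \<in> D} (\<lambda>p. mu p $ i)" using mus by (simp add: smooth_vec_on_def)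
  then have mem: "(\<lambda>q. mu (lift q) $ i) \<in> smooth_closure {q. fst q \<in> D} lift {p. snd p \<in> D}"
    by (rule smooth_closure.comp)
  have into: "\<And>q. q \<in> {q. fst q \<in> D} \<Longrightarrow> lift q \<in> {p. snd p \<in> D}"
    by (simp add: lift_def)
  show "smooth_on {q. fst q \<in> D} (\<lambda>q. mu (lift q) $ i)"
    by (rule smooth_closure_smooth[OF open_V[OF D] open_Omega[OF D] into lift_smooth[OF D D0] mem])
qed

lemma mu_factors_through_lift:
  assumes D: "open D" and D0: "0 \<notin> D" and mus: "smooth_vec_on {p. snd p \<in> D} mu"
    and T: "jtensor_vanishes {p. snd p \<in> D} mu" and gD: "g \<in> D"
  shows "mu (M, g) = mu (lift (g, M \<bullet> g))"
proof -
  have "g \<noteq> 0" using gD D0 by auto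
  define M' where "M' = fst (lift (g, M \<bullet> g))"
  have "lift (g, M \<bullet> g) = (M', g)" "M \<bullet> g = M' \<bullet> g"
    using lift_section[OF \<open>g \<noteq> 0\<close>, of "M \<bullet> g"] unfolding M'_def by (auto simp: prod_eq_iff)
  then show ?thesis using mu_constant_on_hyperplanes[OF D D0 mus T gD, of M M'] by simp
qed

(* Necessity: if the Jacobi tensor vanishes, nu = mu o lift is smooth, represents mu, and
   satisfies the Jacobi condition, which is (minus) the entry J_123. *)
lemma jacobi_condition_of_jtensor_vanishes:
  assumes D: "open D" and D0: "0 \<notin> D" and mus: "smooth_vec_on {p. snd p \<in> D} mu"
    and T: "jtensor_vanishes {p. snd p \<in> D} mu"
  shows "smooth_vec_on {q. fst q \<in> D} (\<lambda>q. mu (lift q))"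
    and "\<And>M g. g \<in> D \<Longrightarrow> mu (M, g) = mu (lift (g, M \<bullet> g))"
    and "\<And>g s. g \<in> D \<Longrightarrow> jacobi_expr (\<lambda>q. mu (lift q)) g s = 0"
proof -
  let ?nu = "\<lambda>q. mu (lift q)"
  show nus: "smooth_vec_on {q. fst q \<in> D} ?nu" by (rule smooth_vec_on_comp_lift[OF D D0 mus])
  show rel: "mu (M, g) = ?nu (g, M \<bullet> g)" if "g \<in> D" for M g
    by (rule mu_factors_through_lift[OF D D0 mus T that])
  fix g s assume gD: "g \<in> D"
  let ?p = "lift (g, s)"
  have "g \<noteq> 0" using gD D0 by auto
  then have p: "snd ?p = g" "fst ?p \<bullet> snd ?p = s" using lift_section[of g s] by auto
  have "- jacobi_expr ?nu g s = jtensor mu ?p 1 2 3"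
    using jtensor_factored[OF D nus rel, of ?p 1 2 3] p gD by simp
  also have "\<dots> = 0"
  proof -
    have "?p \<in> {p. snd p \<in> D}" using p gD by simp
    with T have "\<forall>a\<in>{1..6}. \<forall>b\<in>{1..6}. \<forall>c\<in>{1..6}. jtensor mu ?p a b c = 0"
      unfolding jtensor_vanishes_def by (rule bspec)
    then show ?thesis by auto
  qed
  finally show "jacobi_expr ?nu g s = 0" by simp
qed

section \<open>Sufficiency and the main theorem\<close>

lemma jtensor_vanishes_of_jacobi_condition:
  fixes nu :: "(real^3) \<times> real \<Rightarrow> real^3"
  assumes D: "open D" and nus: "smooth_vec_on {q. fst q \<in> D} nu"
    and rel: "\<And>M g. g \<in> D \<Longrightarrow> mu (M, g) = nu (g, M \<bullet> g)"
    and cond: "\<And>g s. g \<in> D \<Longrightarrow> jacobi_expr nu g s = 0"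
  shows "jtensor_vanishes {p. snd p \<in> D} mu"
  unfolding jtensor_vanishes_def using jtensor_factored[OF D nus rel] cond by simp

theorem mainTheorem1:
  fixes D :: "(real^3) set" and mu :: "(real^3) \<times> (real^3) \<Rightarrow> real^3"
  assumes "open D" and "0 \<notin> D"
    and "smooth_vec_on {p. snd p \<in> D} mu"
  shows "jacobi_on {p. snd p \<in> D} mu \<longleftrightarrow>
    (\<exists>nu :: (real^3) \<times> real \<Rightarrow> real^3.
        smooth_vec_on {q. fst q \<in> D} nu \<and>
        (\<forall>M g. g \<in> D \<longrightarrow> mu (M, g) = nu (g, M \<bullet> g)) \<and>
        (\<forall>g s. g \<in> D \<longrightarrow>
           g \<bullet> curl_gam nu (g, s) + nu (g, s) \<bullet> cross3 g (ds_vec nu (g, s)) = 0))"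
proof -
  have "jacobi_on {p. snd p \<in> D} mu \<longleftrightarrow> jtensor_vanishes {p. snd p \<in> D} mu"
    by (rule jacobi_on_iff_jtensor[OF open_Omega[OF assms(1)] assms(3)])
  also have "\<dots> \<longleftrightarrow> (\<exists>nu. smooth_vec_on {q. fst q \<in> D} nu
      \<and> (\<forall>M g. g \<in> D \<longrightarrow> mu (M, g) = nu (g, M \<bullet> g)) \<and> (\<forall>g s. g \<in> D \<longrightarrow> jacobi_expr nu g s = 0))"
    (is "_ \<longleftrightarrow> (\<exists>nu. ?represents nu)")
  proof
    assume "jtensor_vanishes {p. snd p \<in> D} mu"
    from jacobi_condition_of_jtensor_vanishes[OF assms this]
    have "?represents (\<lambda>q. mu (lift q))" by blast
    then show "\<exists>nu. ?represents nu" by (rule exI[where x="\<lambda>q. mu (lift q)"])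
  next
    assume "\<exists>nu. ?represents nu"
    then show "jtensor_vanishes {p. snd p \<in> D} mu"
      using jtensor_vanishes_of_jacobi_condition[OF assms(1)] by blast
  qed
  finally show ?thesis unfolding jacobi_expr_def .
qed

end
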